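(* Let $H$ be the face algebra described in the context. The braided Hopf algebra ${}_RH$ decomposes as ${}_RH=\bigoplus_{i\in\mathbb Z_N}H^i$, where each $H^i=\mathrm{span}_{\mathbb C}\{X^i_i(p):p\in\mathbb Z_N\}$ is a Hopf algebra over $\mathbb C1^i$ with unit $1^i=\sum_pX^i_i(p)$ (with the structure $X^i_i(p)X^i_i(q)=\delta_{p,q}X^i_i(p)$, $\underline\Delta(X^i_i(s))=\sum_{w+q=s}X^i_i(w)\otimes X^i_i(q)$, counit $X^i_i(s)\mapsto\delta_{s,0}1^i$, antipode $X^i_i(s)\mapsto X^i_i(-s)$). Moreover, for all $i,j\in\mathbb Z_N$ the linear map $\iota^j_i:H^i\to H^j$, $X^i_i(p)\mapsto X^j_j(p)$, is a Hopf algebra isomorphism.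
   Context: Let $N\ge2$, $\mathbb Z_N=\mathbb Z/N\mathbb Z$, $\omega\in\mathbb C$ a primitive $N$th root of unity. $H$ is the $\mathbb C$-vector space with basis $\{X^i_j(s):i,j,s\in\mathbb Z_N\}$, with multiplication $X^i_j(p)X^k_l(q)=\delta_{j,k}\delta_{p,q}X^i_l(p)$, unit $1=\sum_{i,p}X^i_i(p)$, comultiplication $\Delta(X^i_j(s))=\sum_{p+q=s}X^i_j(p)\otimes X^{i+p}_{j+p}(q)$, counit $\varepsilon(X^i_j(s))=\delta_{s,0}$, antipode $S(X^i_j(p))=X^{j+p}_{i+p}(-p)$, and $R=\sum_{i,j,p}X^i_j(p)\otimes X^j_{j+p}(i-j)\omega^{-p(i-j)}$; $(H,R)$ is a quasitriangular weak Hopf algebra (Hayashi's face algebra). ${}_RH=C_H(H_s)=\{1_1hS(1_2)\}$ is its braided Hopf algebra with adjoint action $h\cdot x=h_1xS(h_2)$, comultiplication $\underline\Delta(x)=x_1S(R^2)\otimes R^1\cdot x_2$, counit $\varepsilon_t(h)=\varepsilon(1_1h)1_2$. *)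

theory Defs
  imports Complex_Main
begin

text \<open>Z_N is represented by the canonical residues ZN N = {0..<N} (integers),
  all index arithmetic is taken mod N.  An element of H is its coefficient
  function on the basis triples (i,j,s) standing for X^i_j(s); an element of
  H (x) H is a coefficient function on pairs of basis triples, etc.\<close>

type_synonym idx = "int \<times> int \<times> int"
type_synonym hel = "idx \<Rightarrow> complex"
type_synonym hel2 = "idx \<Rightarrow> idx \<Rightarrow> complex"
type_synonym hel3 = "idx \<Rightarrow> idx \<Rightarrow> idx \<Rightarrow> complex"

definition ZN :: "nat \<Rightarrow> int set" where
  "ZN N = {0..<int N}"

definition Bas :: "nat \<Rightarrow> idx set" where
  "Bas N = ZN N \<times> ZN N \<times> ZN N"

definition primitive_root :: "nat \<Rightarrow> complex \<Rightarrow> bool" where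
  "primitive_root N \<omega> \<longleftrightarrow> \<omega> ^ N = 1 \<and> (\<forall>k. 0 < k \<and> k < N \<longrightarrow> \<omega> ^ k \<noteq> 1)"

definition Hc :: "nat \<Rightarrow> hel set" where
  "Hc N = {x. \<forall>u. u \<notin> Bas N \<longrightarrow> x u = 0}"

text \<open>Basis vector X^i_j(s), indices read mod N.\<close>
definition X :: "nat \<Rightarrow> int \<Rightarrow> int \<Rightarrow> int \<Rightarrow> hel" where
  "X N i j s = (\<lambda>u. if u = (i mod int N, j mod int N, s mod int N) then 1 else 0)"

definition Xb :: "nat \<Rightarrow> idx \<Rightarrow> hel" where
  "Xb N u = (case u of (i, j, s) \<Rightarrow> X N i j s)"

definition tens :: "hel \<Rightarrow> hel \<Rightarrow> hel2" where
  "tens x y = (\<lambda>a b. x a * y b)"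

definition bprod :: "nat \<Rightarrow> idx \<Rightarrow> idx \<Rightarrow> hel" where
  "bprod N v w = (case v of (i, j, p) \<Rightarrow> case w of (k, l, q) \<Rightarrow>
      if j mod int N = k mod int N \<and> p mod int N = q mod int N then X N i l p else (\<lambda>_. 0))"

definition mul :: "nat \<Rightarrow> hel \<Rightarrow> hel \<Rightarrow> hel" where
  "mul N x y = (\<lambda>t. \<Sum>v\<in>Bas N. \<Sum>w\<in>Bas N. x v * y w * bprod N v w t)"

definition one :: "nat \<Rightarrow> hel" where
  "one N = (\<lambda>t. \<Sum>i\<in>ZN N. \<Sum>p\<in>ZN N. X N i i p t)"

definition bDelta :: "nat \<Rightarrow> idx \<Rightarrow> hel2" where
  "bDelta N v = (case v of (i, j, s) \<Rightarrow> (\<lambda>a b. \<Sum>p\<in>ZN N. \<Sum>q\<in>ZN N.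
      if (p + q) mod int N = s mod int N then tens (X N i j p) (X N (i + p) (j + p) q) a b else 0))"

definition Delta :: "nat \<Rightarrow> hel \<Rightarrow> hel2" where
  "Delta N x = (\<lambda>a b. \<Sum>v\<in>Bas N. x v * bDelta N v a b)"

definition eps :: "nat \<Rightarrow> hel \<Rightarrow> complex" where
  "eps N x = (\<Sum>(i, j, s)\<in>Bas N. x (i, j, s) * (if s = 0 then 1 else 0))"

definition S :: "nat \<Rightarrow> hel \<Rightarrow> hel" where
  "S N x = (\<lambda>t. \<Sum>(i, j, p)\<in>Bas N. x (i, j, p) * X N (j + p) (i + p) (- p) t)"

definition Rm :: "nat \<Rightarrow> complex \<Rightarrow> hel2" where
  "Rm N \<omega> = (\<lambda>a b. \<Sum>(i, j, p)\<in>Bas N.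
      \<omega> powi (- (p * (i - j))) * tens (X N i j p) (X N j (j + p) (i - j)) a b)"

definition act :: "nat \<Rightarrow> hel \<Rightarrow> hel \<Rightarrow> hel" where
  "act N h x = (\<lambda>t. \<Sum>u\<in>Bas N. \<Sum>v\<in>Bas N.
      Delta N h u v * mul N (Xb N u) (mul N x (S N (Xb N v))) t)"

definition RH :: "nat \<Rightarrow> hel set" where
  "RH N = {act N (one N) h | h. h \<in> Hc N}"

text \<open>Braided comultiplication x_1 S(R^2) (x) R^1 . x_2.\<close>
definition udelta :: "nat \<Rightarrow> complex \<Rightarrow> hel \<Rightarrow> hel2" where
  "udelta N \<omega> x = (\<lambda>a b. \<Sum>u\<in>Bas N. \<Sum>v\<in>Bas N. \<Sum>c\<in>Bas N. \<Sum>d\<in>Bas N.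
      Delta N x u v * Rm N \<omega> c d * mul N (Xb N u) (S N (Xb N d)) a * act N (Xb N c) (Xb N v) b)"

text \<open>Target counit eps_t(h) = eps(1_1 h) 1_2.\<close>
definition epst :: "nat \<Rightarrow> hel \<Rightarrow> hel" where
  "epst N h = (\<lambda>t. \<Sum>u\<in>Bas N. \<Sum>v\<in>Bas N.
      Delta N (one N) u v * eps N (mul N (Xb N u) h) * Xb N v t)"

definition Hi :: "nat \<Rightarrow> int \<Rightarrow> hel set" where
  "Hi N i = {x. \<exists>c. x = (\<lambda>t. \<Sum>p\<in>ZN N. c p * X N i i p t)}"

definition onei :: "nat \<Rightarrow> int \<Rightarrow> hel" where
  "onei N i = (\<lambda>t. \<Sum>p\<in>ZN N. X N i i p t)"

definition Santi :: "nat \<Rightarrow> int \<Rightarrow> hel \<Rightarrow> hel" where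
  "Santi N i x = (\<lambda>t. \<Sum>p\<in>ZN N. x (i, i, p) * X N i i (- p) t)"

definition iota :: "nat \<Rightarrow> int \<Rightarrow> int \<Rightarrow> hel \<Rightarrow> hel" where
  "iota N i j x = (\<lambda>t. \<Sum>p\<in>ZN N. x (i, i, p) * X N j j p t)"

definition Tens2 :: "hel set \<Rightarrow> hel2 set" where
  "Tens2 V = {(\<lambda>a b. \<Sum>k<(n::nat). tens (f k) (g k) a b) | n f g. \<forall>k<n. f k \<in> V \<and> g k \<in> V}"

definition mul2 :: "nat \<Rightarrow> (hel \<Rightarrow> hel \<Rightarrow> hel) \<Rightarrow> hel2 \<Rightarrow> hel2 \<Rightarrow> hel2" where
  "mul2 N m A B = (\<lambda>a b. \<Sum>u\<in>Bas N. \<Sum>v\<in>Bas N. \<Sum>w\<in>Bas N. \<Sum>z\<in>Bas N.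
      A u v * B w z * m (Xb N u) (Xb N w) a * m (Xb N v) (Xb N z) b)"

definition lin_l :: "nat \<Rightarrow> (hel \<Rightarrow> hel2) \<Rightarrow> hel2 \<Rightarrow> hel3" where
  "lin_l N F A = (\<lambda>a b c. \<Sum>u\<in>Bas N. \<Sum>v\<in>Bas N. A u v * F (Xb N u) a b * Xb N v c)"

definition lin_r :: "nat \<Rightarrow> (hel \<Rightarrow> hel2) \<Rightarrow> hel2 \<Rightarrow> hel3" where
  "lin_r N F A = (\<lambda>a b c. \<Sum>u\<in>Bas N. \<Sum>v\<in>Bas N. A u v * Xb N u a * F (Xb N v) b c)"

definition map2 :: "nat \<Rightarrow> (hel \<Rightarrow> hel) \<Rightarrow> (hel \<Rightarrow> hel) \<Rightarrow> hel2 \<Rightarrow> hel2" where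
  "map2 N f g A = (\<lambda>a b. \<Sum>u\<in>Bas N. \<Sum>v\<in>Bas N. A u v * f (Xb N u) a * g (Xb N v) b)"

definition conv :: "nat \<Rightarrow> (hel \<Rightarrow> hel \<Rightarrow> hel) \<Rightarrow> (hel \<Rightarrow> hel) \<Rightarrow> (hel \<Rightarrow> hel) \<Rightarrow> hel2 \<Rightarrow> hel" where
  "conv N m f g A = (\<lambda>t. \<Sum>u\<in>Bas N. \<Sum>v\<in>Bas N. A u v * m (f (Xb N u)) (g (Xb N v)) t)"

definition is_subspace :: "hel set \<Rightarrow> bool" where
  "is_subspace V \<longleftrightarrow> (\<lambda>_. 0) \<in> V \<and> (\<forall>x\<in>V. \<forall>y\<in>V. (\<lambda>t. x t + y t) \<in> V)
     \<and> (\<forall>c. \<forall>x\<in>V. (\<lambda>t. c * x t) \<in> V)"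

definition lin_on :: "hel set \<Rightarrow> (hel \<Rightarrow> hel) \<Rightarrow> bool" where
  "lin_on V f \<longleftrightarrow> (\<forall>x\<in>V. \<forall>y\<in>V. f (\<lambda>t. x t + y t) = (\<lambda>t. f x t + f y t))
     \<and> (\<forall>c. \<forall>x\<in>V. f (\<lambda>t. c * x t) = (\<lambda>t. c * f x t))"

definition lin_on2 :: "hel set \<Rightarrow> (hel \<Rightarrow> hel2) \<Rightarrow> bool" where
  "lin_on2 V f \<longleftrightarrow> (\<forall>x\<in>V. \<forall>y\<in>V. f (\<lambda>t. x t + y t) = (\<lambda>a b. f x a b + f y a b))
     \<and> (\<forall>c. \<forall>x\<in>V. f (\<lambda>t. c * x t) = (\<lambda>a b. c * f x a b))"

text \<open>V is a Hopf algebra over the ground algebra C e (unit e), with multiplication m,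
  comultiplication D, counit ep (valued in C e) and antipode an.\<close>
definition hopf_over :: "nat \<Rightarrow> hel set \<Rightarrow> hel \<Rightarrow> (hel \<Rightarrow> hel \<Rightarrow> hel) \<Rightarrow> (hel \<Rightarrow> hel2)
    \<Rightarrow> (hel \<Rightarrow> hel) \<Rightarrow> (hel \<Rightarrow> hel) \<Rightarrow> bool" where
  "hopf_over N V e m D ep an \<longleftrightarrow>
     is_subspace V \<and> e \<in> V
   \<and> (\<forall>x\<in>V. \<forall>y\<in>V. m x y \<in> V)
   \<and> (\<forall>z\<in>V. lin_on V (\<lambda>x. m x z) \<and> lin_on V (\<lambda>x. m z x))
   \<and> (\<forall>x\<in>V. \<forall>y\<in>V. \<forall>z\<in>V. m (m x y) z = m x (m y z))
   \<and> (\<forall>x\<in>V. m e x = x \<and> m x e = x)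
   \<and> lin_on2 V D \<and> (\<forall>x\<in>V. D x \<in> Tens2 V)
   \<and> (\<forall>x\<in>V. lin_l N D (D x) = lin_r N D (D x))
   \<and> lin_on V ep \<and> (\<forall>x\<in>V. \<exists>c. ep x = (\<lambda>t. c * e t))
   \<and> (\<forall>x\<in>V. conv N m ep id (D x) = x \<and> conv N m id ep (D x) = x)
   \<and> D e = tens e e \<and> (\<forall>x\<in>V. \<forall>y\<in>V. D (m x y) = mul2 N m (D x) (D y))
   \<and> ep e = e \<and> (\<forall>x\<in>V. \<forall>y\<in>V. ep (m x y) = m (ep x) (ep y))
   \<and> lin_on V an \<and> (\<forall>x\<in>V. an x \<in> V)
   \<and> (\<forall>x\<in>V. conv N m an id (D x) = ep x \<and> conv N m id an (D x) = ep x)"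

definition hopf_iso :: "nat \<Rightarrow> hel set \<Rightarrow> hel set \<Rightarrow> hel \<Rightarrow> hel \<Rightarrow> (hel \<Rightarrow> hel \<Rightarrow> hel) \<Rightarrow> (hel \<Rightarrow> hel2)
    \<Rightarrow> (hel \<Rightarrow> hel) \<Rightarrow> (hel \<Rightarrow> hel) \<Rightarrow> (hel \<Rightarrow> hel) \<Rightarrow> (hel \<Rightarrow> hel) \<Rightarrow> (hel \<Rightarrow> hel) \<Rightarrow> bool" where
  "hopf_iso N V W eV eW m D epV epW anV anW f \<longleftrightarrow>
     bij_betw f V W \<and> lin_on V f
   \<and> f eV = eW \<and> (\<forall>x\<in>V. \<forall>y\<in>V. f (m x y) = m (f x) (f y))
   \<and> (\<forall>x\<in>V. D (f x) = map2 N f f (D x))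
   \<and> (\<forall>x\<in>V. epW (f x) = f (epV x))
   \<and> (\<forall>x\<in>V. anW (f x) = f (anV x))"

end

theory Submission
  imports Defs
begin

text \<open>The adjoint action of \<open>1\<close> kills
  \<open>X^i_j(s)\<close> for \<open>i \<noteq> j\<close> and fixes \<open>X^i_i(s)\<close>, so \<open>_RH\<close> is spanned by the diagonal
  vectors, and sorting them by \<open>i\<close> gives the direct sum. In the braided coproduct of \<open>X^i_i(s)\<close>
  a single term of \<open>R\<close> survives, with scalar \<open>1\<close>, leaving \<open>\<Sum>\<^sub>w\<^sub>+\<^sub>q\<^sub>=\<^sub>s X^i_i(w) \<otimes> X^i_i(q)\<close>.
  Hence in the coordinates \<open>c \<mapsto> \<Sum>\<^sub>p c(p) X^i_i(p)\<close> every \<open>H^i\<close> is the Hopf algebra of functions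
  on \<open>\<int>\<^sub>N\<close>: pointwise product, coproduct dual to addition, counit evaluation at \<open>0\<close>, antipode
  \<open>c \<mapsto> c(-\<cdot>)\<close>. All Hopf axioms become identities between coordinate functions, and since
  these do not involve \<open>i\<close>, the maps \<open>\<iota>^j_i\<close>, which keep the coordinates, are isomorphisms.\<close>

lemma ZN_mod_eq: "x \<in> ZN N \<Longrightarrow> x mod int N = x"
  by (auto simp: ZN_def)

lemma mod_in_ZN: "N > 0 \<Longrightarrow> a mod int N \<in> ZN N"
  by (auto simp: ZN_def)

lemma finite_ZN [simp]: "finite (ZN N)"
  by (simp add: ZN_def)

lemma finite_Bas [simp]: "finite (Bas N)"
  by (simp add: Bas_def)

lemma sum_Bas_eq: "(\<Sum>u\<in>Bas N. f u) = (\<Sum>a\<in>ZN N. \<Sum>b\<in>ZN N. \<Sum>c\<in>ZN N. f (a, b, c))"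
  by (simp add: Bas_def sum.cartesian_product)

lemma sum_ZN_eq_sum_lessThan: "(\<Sum>p\<in>ZN N. f p) = (\<Sum>k<N. f (int k))"
proof -
  have "ZN N = int ` {..<N}"
    unfolding ZN_def by (simp add: image_atLeastZeroLessThan_int)
  then show ?thesis by (simp add: sum.reindex)
qed

lemma sum_comm3: "(\<Sum>u\<in>A. \<Sum>v\<in>B. \<Sum>p\<in>P. h u v p) = (\<Sum>p\<in>P. \<Sum>u\<in>A. \<Sum>v\<in>B. h u v p)"
proof -
  have "(\<Sum>u\<in>A. \<Sum>v\<in>B. \<Sum>p\<in>P. h u v p) = (\<Sum>u\<in>A. \<Sum>p\<in>P. \<Sum>v\<in>B. h u v p)"
    by (rule sum.cong[OF refl], rule sum.swap)
  also have "\<dots> = (\<Sum>p\<in>P. \<Sum>u\<in>A. \<Sum>v\<in>B. h u v p)"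
    by (rule sum.swap)
  finally show ?thesis .
qed

lemma sum_comm4:
  "(\<Sum>u\<in>A. \<Sum>v\<in>B. \<Sum>p\<in>P. \<Sum>q\<in>Q. h u v p q) = (\<Sum>p\<in>P. \<Sum>q\<in>Q. \<Sum>u\<in>A. \<Sum>v\<in>B. h u v p q)"
proof -
  have "(\<Sum>u\<in>A. \<Sum>v\<in>B. \<Sum>p\<in>P. \<Sum>q\<in>Q. h u v p q) = (\<Sum>p\<in>P. \<Sum>u\<in>A. \<Sum>v\<in>B. \<Sum>q\<in>Q. h u v p q)"
    by (rule sum_comm3)
  also have "\<dots> = (\<Sum>p\<in>P. \<Sum>q\<in>Q. \<Sum>u\<in>A. \<Sum>v\<in>B. h u v p q)"
    by (rule sum.cong[OF refl], rule sum_comm3)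
  finally show ?thesis .
qed

lemma X_mod_left [simp]: "X N (a mod int N) b c = X N a b c"
  and X_mod_mid [simp]: "X N a (b mod int N) c = X N a b c"
  and X_mod_right [simp]: "X N a b (c mod int N) = X N a b c"
  and X_mod_add_left [simp]: "X N (a mod int N + p) b c = X N (a + p) b c"
  and X_mod_add_mid [simp]: "X N a (b mod int N + p) c = X N a (b + p) c"
  by (simp_all add: X_def mod_add_left_eq)

lemma X_cong:
  "a mod int N = a' mod int N \<Longrightarrow> b mod int N = b' mod int N \<Longrightarrow> c mod int N = c' mod int N
   \<Longrightarrow> X N a b c = X N a' b' c'"
  by (simp add: X_def)

lemma X_diag_apply: "i \<in> ZN N \<Longrightarrow> p \<in> ZN N \<Longrightarrow> X N i i p t = (if t = (i, i, p) then 1 else 0)"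
  by (simp add: X_def ZN_mod_eq)

lemma Xb_mod: "Xb N (a mod int N, b mod int N, c mod int N) = X N a b c"
  and Xb_diag: "Xb N (i, i, p) = X N i i p"
  by (simp_all add: Xb_def)

lemma sum_Bas_X_mult:
  assumes "N > 0"
  shows "(\<Sum>u\<in>Bas N. X N a b c u * F u) = F (a mod int N, b mod int N, c mod int N)"
proof -
  have "(a mod int N, b mod int N, c mod int N) \<in> Bas N"
    using assms by (simp add: Bas_def mod_in_ZN)
  moreover have "(\<Sum>u\<in>Bas N. X N a b c u * F u)
      = (\<Sum>u\<in>Bas N. if u = (a mod int N, b mod int N, c mod int N) then F u else 0)"
    by (rule sum.cong) (auto simp: X_def)
  ultimately show ?thesis by simp
qed

lemma sum_Bas2_X_mult:
  assumes "N > 0"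
  shows "(\<Sum>u\<in>Bas N. \<Sum>v\<in>Bas N. X N a b c u * (X N d e f v * G u v))
    = G (a mod int N, b mod int N, c mod int N) (d mod int N, e mod int N, f mod int N)"
proof -
  have "(\<Sum>u\<in>Bas N. \<Sum>v\<in>Bas N. X N a b c u * (X N d e f v * G u v))
      = (\<Sum>u\<in>Bas N. X N a b c u * (\<Sum>v\<in>Bas N. X N d e f v * G u v))"
    by (simp add: sum_distrib_left)
  then show ?thesis using assms by (simp add: sum_Bas_X_mult)
qed

lemma sum_Bas2_weighted_expand:
  assumes "N > 0"
  shows "(\<Sum>u\<in>Bas N. \<Sum>v\<in>Bas N. (\<Sum>x\<in>P. f x * (X N (a x) (b x) (c x) u * X N (d x) (e x) (g x) v)) * G u v)
   = (\<Sum>x\<in>P. f x * G (a x mod int N, b x mod int N, c x mod int N) (d x mod int N, e x mod int N, g x mod int N))"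
proof -
  have "(\<Sum>u\<in>Bas N. \<Sum>v\<in>Bas N. (\<Sum>x\<in>P. f x * (X N (a x) (b x) (c x) u * X N (d x) (e x) (g x) v)) * G u v)
    = (\<Sum>u\<in>Bas N. \<Sum>v\<in>Bas N. \<Sum>x\<in>P. f x * (X N (a x) (b x) (c x) u * (X N (d x) (e x) (g x) v * G u v)))"
    by (simp add: sum_distrib_right mult.assoc)
  also have "\<dots> = (\<Sum>x\<in>P. f x * (\<Sum>u\<in>Bas N. \<Sum>v\<in>Bas N. X N (a x) (b x) (c x) u * (X N (d x) (e x) (g x) v * G u v)))"
    by (subst sum_comm3) (simp add: sum_distrib_left)
  finally have "(\<Sum>u\<in>Bas N. \<Sum>v\<in>Bas N. (\<Sum>x\<in>P. f x * (X N (a x) (b x) (c x) u * X N (d x) (e x) (g x) v)) * G u v)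
    = (\<Sum>x\<in>P. f x * (\<Sum>u\<in>Bas N. \<Sum>v\<in>Bas N. X N (a x) (b x) (c x) u * (X N (d x) (e x) (g x) v * G u v)))" .
  then show ?thesis using assms by (simp add: sum_Bas2_X_mult)
qed

lemma sum_Bas2_cond_expand:
  assumes "N > 0"
  shows "(\<Sum>u\<in>Bas N. \<Sum>v\<in>Bas N. (\<Sum>p\<in>P. \<Sum>q\<in>Q. if C p q then X N (a p q) (b p q) (c p q) u * X N (d p q) (e p q) (f p q) v else 0) * G u v)
   = (\<Sum>p\<in>P. \<Sum>q\<in>Q. if C p q then G (a p q mod int N, b p q mod int N, c p q mod int N) (d p q mod int N, e p q mod int N, f p q mod int N) else 0)"
proof -
  have "(\<Sum>u\<in>Bas N. \<Sum>v\<in>Bas N. (\<Sum>p\<in>P. \<Sum>q\<in>Q. if C p q then X N (a p q) (b p q) (c p q) u * X N (d p q) (e p q) (f p q) v else 0) * G u v)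
    = (\<Sum>u\<in>Bas N. \<Sum>v\<in>Bas N. \<Sum>p\<in>P. \<Sum>q\<in>Q. if C p q then X N (a p q) (b p q) (c p q) u * (X N (d p q) (e p q) (f p q) v * G u v) else 0)"
    by (auto simp: sum_distrib_right mult.assoc intro!: sum.cong)
  also have "\<dots> = (\<Sum>p\<in>P. \<Sum>q\<in>Q. \<Sum>u\<in>Bas N. \<Sum>v\<in>Bas N. if C p q then X N (a p q) (b p q) (c p q) u * (X N (d p q) (e p q) (f p q) v * G u v) else 0)"
    by (rule sum_comm4)
  also have "\<dots> = (\<Sum>p\<in>P. \<Sum>q\<in>Q. if C p q then G (a p q mod int N, b p q mod int N, c p q mod int N) (d p q mod int N, e p q mod int N, f p q mod int N) else 0)"
    using assms by (intro sum.cong refl) (simp add: sum_Bas2_X_mult)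
  finally show ?thesis .
qed

lemma Hc_expand:
  assumes "x \<in> Hc N"
  shows "x = (\<lambda>t. \<Sum>w\<in>Bas N. x w * Xb N w t)"
proof
  fix t
  have "(\<Sum>w\<in>Bas N. x w * Xb N w t) = (\<Sum>w\<in>Bas N. if w = t then x t else 0)"
    by (intro sum.cong refl) (auto simp: Xb_def X_def Bas_def ZN_mod_eq)
  also have "\<dots> = x t"
  proof (cases "t \<in> Bas N")
    case False
    then have "x t = 0" using assms unfolding Hc_def by blast
    then show ?thesis using False by simp
  qed simp
  finally show "x t = (\<Sum>w\<in>Bas N. x w * Xb N w t)" by simp
qed

lemma mul_X_X_apply:
  assumes "N > 0"
  shows "mul N (X N a b c) (X N d e f) t
    = (if b mod int N = d mod int N \<and> c mod int N = f mod int N then X N a e c t else 0)"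
proof -
  have "mul N (X N a b c) (X N d e f) t = (\<Sum>v\<in>Bas N. X N a b c v * (\<Sum>w\<in>Bas N. X N d e f w * bprod N v w t))"
    by (simp add: mul_def sum_distrib_left mult.assoc)
  also have "\<dots> = bprod N (a mod int N, b mod int N, c mod int N) (d mod int N, e mod int N, f mod int N) t"
    using assms by (simp add: sum_Bas_X_mult)
  finally show ?thesis by (auto simp: bprod_def intro: X_cong[THEN fun_cong])
qed

lemma mul_X_X:
  assumes "N > 0"
  shows "mul N (X N a b c) (X N d e f)
    = (if b mod int N = d mod int N \<and> c mod int N = f mod int N then X N a e c else (\<lambda>_. 0))"
  using mul_X_X_apply[OF assms] by auto

lemma mul_zero_left [simp]: "mul N (\<lambda>_. 0) x = (\<lambda>_. 0)"
  and mul_zero_right [simp]: "mul N x (\<lambda>_. 0) = (\<lambda>_. 0)"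
  by (simp_all add: mul_def)

lemma S_X:
  assumes "N > 0"
  shows "S N (X N a b c) = X N (b + c) (a + c) (- c)"
proof
  fix t
  have "S N (X N a b c) t = (\<Sum>u\<in>Bas N. X N a b c u * (case u of (i, j, p) \<Rightarrow> X N (j + p) (i + p) (- p) t))"
    unfolding S_def by (rule sum.cong) auto
  also have "\<dots> = X N (b mod int N + c mod int N) (a mod int N + c mod int N) (- (c mod int N)) t"
    using assms by (simp add: sum_Bas_X_mult)
  also have "\<dots> = X N (b + c) (a + c) (- c) t"
    by (simp add: X_def mod_add_eq mod_minus_eq)
  finally show "S N (X N a b c) t = X N (b + c) (a + c) (- c) t" .
qed

lemma Delta_X:
  assumes "N > 0"
  shows "Delta N (X N a b c) u v = (\<Sum>p\<in>ZN N. \<Sum>q\<in>ZN N.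
      if (p + q) mod int N = c mod int N then X N a b p u * X N (a + p) (b + p) q v else 0)"
proof -
  have "Delta N (X N a b c) u v = bDelta N (a mod int N, b mod int N, c mod int N) u v"
    using assms by (simp add: Delta_def sum_Bas_X_mult)
  then show ?thesis
    unfolding bDelta_def tens_def by (simp only: X_mod_left X_mod_mid X_mod_add_left X_mod_add_mid split_conv mod_mod_trivial)
qed

lemma eps_X:
  assumes "N > 0"
  shows "eps N (X N a b c) = (if c mod int N = 0 then 1 else 0)"
proof -
  have "eps N (X N a b c) = (\<Sum>u\<in>Bas N. X N a b c u * (case u of (i, j, s) \<Rightarrow> if s = 0 then 1 else 0))"
    unfolding eps_def by (rule sum.cong) auto
  then show ?thesis using assms by (simp add: sum_Bas_X_mult)
qed

lemma eps_zero [simp]: "eps N (\<lambda>_. 0) = 0"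
  by (simp add: eps_def)

lemma Delta_sum: "Delta N (\<lambda>t. \<Sum>p\<in>P. f p * g p t) u v = (\<Sum>p\<in>P. f p * Delta N (g p) u v)"
proof -
  have "Delta N (\<lambda>t. \<Sum>p\<in>P. f p * g p t) u v = (\<Sum>w\<in>Bas N. \<Sum>p\<in>P. f p * (g p w * bDelta N w u v))"
    by (simp add: Delta_def sum_distrib_right mult.assoc)
  also have "\<dots> = (\<Sum>p\<in>P. \<Sum>w\<in>Bas N. f p * (g p w * bDelta N w u v))"
    by (rule sum.swap)
  finally show ?thesis by (simp add: Delta_def sum_distrib_left)
qed

lemma mul_sum_left: "mul N (\<lambda>t. \<Sum>p\<in>P. f p * g p t) y t' = (\<Sum>p\<in>P. f p * mul N (g p) y t')"
proof -
  have "mul N (\<lambda>t. \<Sum>p\<in>P. f p * g p t) y t'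
      = (\<Sum>v\<in>Bas N. \<Sum>w\<in>Bas N. \<Sum>p\<in>P. f p * (g p v * y w * bprod N v w t'))"
    by (simp add: mul_def sum_distrib_right mult.assoc)
  also have "\<dots> = (\<Sum>p\<in>P. \<Sum>v\<in>Bas N. \<Sum>w\<in>Bas N. f p * (g p v * y w * bprod N v w t'))"
    by (rule sum_comm3)
  finally show ?thesis by (simp add: mul_def sum_distrib_left)
qed

lemma mul_sum_right: "mul N x (\<lambda>t. \<Sum>p\<in>P. f p * g p t) t' = (\<Sum>p\<in>P. f p * mul N x (g p) t')"
proof -
  have "mul N x (\<lambda>t. \<Sum>p\<in>P. f p * g p t) t'
      = (\<Sum>v\<in>Bas N. \<Sum>w\<in>Bas N. \<Sum>p\<in>P. f p * (x v * g p w * bprod N v w t'))"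
    by (simp add: mul_def sum_distrib_right sum_distrib_left mult.assoc mult.left_commute)
  also have "\<dots> = (\<Sum>p\<in>P. \<Sum>v\<in>Bas N. \<Sum>w\<in>Bas N. f p * (x v * g p w * bprod N v w t'))"
    by (rule sum_comm3)
  finally show ?thesis by (simp add: mul_def sum_distrib_left)
qed

lemma eps_sum: "eps N (\<lambda>t. \<Sum>p\<in>P. f p * g p t) = (\<Sum>p\<in>P. f p * eps N (g p))"
proof -
  have "eps N (\<lambda>t. \<Sum>p\<in>P. f p * g p t)
      = (\<Sum>w\<in>Bas N. \<Sum>p\<in>P. f p * (g p w * (case w of (i, j, s) \<Rightarrow> if s = 0 then 1 else 0)))"
    unfolding eps_def by (rule sum.cong) (auto simp: sum_distrib_right mult.assoc)
  also have "\<dots> = (\<Sum>p\<in>P. \<Sum>w\<in>Bas N. f p * (g p w * (case w of (i, j, s) \<Rightarrow> if s = 0 then 1 else 0)))"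
    by (rule sum.swap)
  also have "\<dots> = (\<Sum>p\<in>P. f p * eps N (g p))"
    unfolding eps_def sum_distrib_left by (intro sum.cong refl) auto
  finally show ?thesis .
qed

lemma act_sum_left: "act N (\<lambda>t. \<Sum>p\<in>P. f p * g p t) x t' = (\<Sum>p\<in>P. f p * act N (g p) x t')"
proof -
  have "act N (\<lambda>t. \<Sum>p\<in>P. f p * g p t) x t'
      = (\<Sum>u\<in>Bas N. \<Sum>v\<in>Bas N. \<Sum>p\<in>P. f p * (Delta N (g p) u v * mul N (Xb N u) (mul N x (S N (Xb N v))) t'))"
    by (simp add: act_def Delta_sum sum_distrib_right mult.assoc)
  also have "\<dots> = (\<Sum>p\<in>P. \<Sum>u\<in>Bas N. \<Sum>v\<in>Bas N. f p * (Delta N (g p) u v * mul N (Xb N u) (mul N x (S N (Xb N v))) t'))"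
    by (rule sum_comm3)
  finally show ?thesis by (simp add: act_def sum_distrib_left)
qed

lemma act_sum_right: "act N h (\<lambda>t. \<Sum>p\<in>P. f p * g p t) t' = (\<Sum>p\<in>P. f p * act N h (g p) t')"
proof -
  have mul_left: "mul N (\<lambda>t. \<Sum>p\<in>P. f p * g p t) z = (\<lambda>t. \<Sum>p\<in>P. f p * mul N (g p) z t)" for z
    by (rule ext) (rule mul_sum_left)
  have "act N h (\<lambda>t. \<Sum>p\<in>P. f p * g p t) t'
      = (\<Sum>u\<in>Bas N. \<Sum>v\<in>Bas N. \<Sum>p\<in>P. f p * (Delta N h u v * mul N (Xb N u) (mul N (g p) (S N (Xb N v))) t'))"
    by (simp add: act_def mul_left mul_sum_right sum_distrib_left mult.left_commute)
  also have "\<dots> = (\<Sum>p\<in>P. \<Sum>u\<in>Bas N. \<Sum>v\<in>Bas N. f p * (Delta N h u v * mul N (Xb N u) (mul N (g p) (S N (Xb N v))) t'))"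
    by (rule sum_comm3)
  finally show ?thesis by (simp add: act_def sum_distrib_left)
qed

lemma udelta_sum: "udelta N \<omega> (\<lambda>t. \<Sum>p\<in>P. f p * g p t) a b = (\<Sum>p\<in>P. f p * udelta N \<omega> (g p) a b)"
proof -
  define K where "K = (\<lambda>u v. \<Sum>c\<in>Bas N. \<Sum>d\<in>Bas N.
    Rm N \<omega> c d * (mul N (Xb N u) (S N (Xb N d)) a * act N (Xb N c) (Xb N v) b))"
  have udelta_K: "udelta N \<omega> x a b = (\<Sum>u\<in>Bas N. \<Sum>v\<in>Bas N. Delta N x u v * K u v)" for x
    unfolding udelta_def K_def by (simp add: sum_distrib_left mult.assoc)
  have "(\<Sum>u\<in>Bas N. \<Sum>v\<in>Bas N. Delta N (\<lambda>t. \<Sum>p\<in>P. f p * g p t) u v * K u v)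
     = (\<Sum>u\<in>Bas N. \<Sum>v\<in>Bas N. \<Sum>p\<in>P. f p * (Delta N (g p) u v * K u v))"
    by (simp add: Delta_sum sum_distrib_right mult.assoc)
  also have "\<dots> = (\<Sum>p\<in>P. \<Sum>u\<in>Bas N. \<Sum>v\<in>Bas N. f p * (Delta N (g p) u v * K u v))"
    by (rule sum_comm3)
  finally show ?thesis unfolding udelta_K by (simp add: sum_distrib_left)
qed

lemma epst_sum: "epst N (\<lambda>t. \<Sum>p\<in>P. f p * g p t) t' = (\<Sum>p\<in>P. f p * epst N (g p) t')"
proof -
  have mul_right: "mul N (Xb N u) (\<lambda>t. \<Sum>p\<in>P. f p * g p t) = (\<lambda>t. \<Sum>p\<in>P. f p * mul N (Xb N u) (g p) t)" for u
    by (rule ext) (rule mul_sum_right)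
  have "epst N (\<lambda>t. \<Sum>p\<in>P. f p * g p t) t'
      = (\<Sum>u\<in>Bas N. \<Sum>v\<in>Bas N. \<Sum>p\<in>P. f p * (Delta N (one N) u v * eps N (mul N (Xb N u) (g p)) * Xb N v t'))"
    unfolding epst_def mul_right eps_sum
    by (simp add: sum_distrib_right sum_distrib_left mult.assoc mult.left_commute)
  also have "\<dots> = (\<Sum>p\<in>P. \<Sum>u\<in>Bas N. \<Sum>v\<in>Bas N. f p * (Delta N (one N) u v * eps N (mul N (Xb N u) (g p)) * Xb N v t'))"
    by (rule sum_comm3)
  finally show ?thesis by (simp add: epst_def sum_distrib_left)
qed

section \<open>The adjoint action and the braided structure on basis vectors\<close>

lemma mod_add_mod_neg: "(l + c mod n + (- c) mod n) mod n = l mod (n::int)"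
  by (metis add.right_neutral add.assoc mod_add_eq mod_add_right_eq add.right_inverse)

lemma adjoint_index_iff:
  fixes n p q :: int
  assumes "p mod n = p" "q mod n = q"
  shows "((p + q) mod n = r mod n \<and> b mod n = (l + p + q) mod n \<and> c mod n = (- q) mod n
      \<and> l mod n = a mod n \<and> p mod n = c mod n)
    \<longleftrightarrow> (p = c mod n \<and> q = (- c) mod n \<and> r mod n = 0 \<and> l mod n = a mod n \<and> a mod n = b mod n)"
proof -
  have "c mod n = (- q) mod n \<longleftrightarrow> q = (- c) mod n"
    using assms(2) by (metis minus_minus mod_minus_eq)
  then show ?thesis
    using assms(1) mod_add_mod_neg[of l c n] mod_add_mod_neg[of 0 c n] by (auto simp: add.assoc)
qed

lemma act_X_summand:
  assumes "N > 0" "p \<in> ZN N" "q \<in> ZN N"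
  shows "(if (p + q) mod int N = r mod int N
      then mul N (X N k l p) (mul N (X N a b c) (X N (l + p + q) (k + p + q) (- q))) t else 0)
    = (if p = c mod int N \<and> q = (- c) mod int N \<and> r mod int N = 0 \<and> l mod int N = a mod int N
         \<and> a mod int N = b mod int N then X N k k c t else 0)"
proof -
  let ?n = "int N"
  have "(if (p + q) mod ?n = r mod ?n
      then mul N (X N k l p) (mul N (X N a b c) (X N (l + p + q) (k + p + q) (- q))) t else 0)
    = (if (p + q) mod ?n = r mod ?n \<and> b mod ?n = (l + p + q) mod ?n \<and> c mod ?n = (- q) mod ?n
         \<and> l mod ?n = a mod ?n \<and> p mod ?n = c mod ?n then X N k (k + p + q) p t else 0)"
    using assms(1) by (simp add: mul_X_X mul_X_X_apply)
  also have "\<dots> = (if p = c mod ?n \<and> q = (- c) mod ?n \<and> r mod ?n = 0 \<and> l mod ?n = a mod ?n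
         \<and> a mod ?n = b mod ?n then X N k (k + p + q) p t else 0)"
    unfolding adjoint_index_iff[OF ZN_mod_eq[OF assms(2)] ZN_mod_eq[OF assms(3)]] ..
  also have "\<dots> = (if p = c mod ?n \<and> q = (- c) mod ?n \<and> r mod ?n = 0 \<and> l mod ?n = a mod ?n
         \<and> a mod ?n = b mod ?n then X N k k c t else 0)"
    by (auto intro!: X_cong[THEN fun_cong] simp: mod_add_mod_neg)
  finally show ?thesis .
qed

lemma act_X:
  assumes "N > 0"
  shows "act N (X N k l r) (X N a b c)
    = (if r mod int N = 0 \<and> l mod int N = a mod int N \<and> a mod int N = b mod int N then X N k k c else (\<lambda>_. 0))"
proof
  fix t
  let ?n = "int N"
  have "act N (X N k l r) (X N a b c) t = (\<Sum>p\<in>ZN N. \<Sum>q\<in>ZN N. if (p + q) mod ?n = r mod ?n then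
      mul N (Xb N (k mod ?n, l mod ?n, p mod ?n)) (mul N (X N a b c) (S N (Xb N ((k + p) mod ?n, (l + p) mod ?n, q mod ?n)))) t else 0)"
    unfolding act_def Delta_X[OF assms] by (rule sum_Bas2_cond_expand[OF assms])
  also have "\<dots> = (\<Sum>p\<in>ZN N. \<Sum>q\<in>ZN N. if (p + q) mod ?n = r mod ?n then
      mul N (X N k l p) (mul N (X N a b c) (X N (l + p + q) (k + p + q) (- q))) t else 0)"
    by (intro sum.cong refl) (simp only: Xb_mod S_X[OF assms] add.assoc)
  also have "\<dots> = (\<Sum>p\<in>ZN N. \<Sum>q\<in>ZN N. if p = c mod ?n \<and> q = (- c) mod ?n \<and> r mod ?n = 0 \<and> l mod ?n = a mod ?n
         \<and> a mod ?n = b mod ?n then X N k k c t else 0)"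
    using assms by (intro sum.cong refl) (rule act_X_summand)
  also have "\<dots> = (\<Sum>p\<in>ZN N. if p = c mod ?n then \<Sum>q\<in>ZN N. if q = (- c) mod ?n then
      (if r mod ?n = 0 \<and> l mod ?n = a mod ?n \<and> a mod ?n = b mod ?n then X N k k c t else 0) else 0 else 0)"
    by (intro sum.cong refl) auto
  also have "\<dots> = (if r mod ?n = 0 \<and> l mod ?n = a mod ?n \<and> a mod ?n = b mod ?n then X N k k c t else 0)"
    using assms by (simp add: mod_in_ZN)
  finally show "act N (X N k l r) (X N a b c) t
    = (if r mod ?n = 0 \<and> l mod ?n = a mod ?n \<and> a mod ?n = b mod ?n then X N k k c else (\<lambda>_. 0)) t"
    by simp
qed

lemma Rm_expand:
  "Rm N \<omega> c d = (\<Sum>x\<in>Bas N. (case x of (k, l, r) \<Rightarrow> \<omega> powi (- (r * (k - l)))) *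
      (X N (fst x) (fst (snd x)) (snd (snd x)) c * X N (fst (snd x)) (fst (snd x) + snd (snd x)) (fst x - fst (snd x)) d))"
  unfolding Rm_def tens_def by (rule sum.cong) auto

text \<open>Only the term \<open>X^i_{i+p}(0) \<otimes> X^{i+p}_{i+p}(-p)\<close> of \<open>R\<close> contributes to the braided
  coproduct of \<open>X^i_i(s)\<close>; its scalar is \<open>\<omega>^0 = 1\<close>, so the result does not depend on \<open>\<omega>\<close>.\<close>

lemma udelta_X_summand:
  assumes "N > 0" "i \<in> ZN N" "(k, l, r) \<in> Bas N"
  shows "mul N (X N i i p) (S N (X N l (l + r) (k - l))) a * act N (X N k l r) (X N (i + p) (i + p) q) b
    = (if (k, l, r) = (i, (i + p) mod int N, 0) then X N i i p a * X N i i q b else 0)"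
proof (cases "(k, l, r) = (i, (i + p) mod int N, 0)")
  case True
  let ?n = "int N"
  have "(2 * i + (p - (i + p) mod ?n)) mod ?n = (2 * i + p - (i + p)) mod ?n"
    by (simp add: algebra_simps mod_diff_right_eq)
  then have i_eq: "(2 * i + (p - (i + p) mod ?n)) mod ?n = i mod ?n"
    by simp
  then have "X N i (2 * i + (p - (i + p) mod ?n)) p = X N i i p"
    by (intro X_cong) simp_all
  moreover have "((i + p) mod ?n - i) mod ?n = p mod ?n"
    by (simp add: mod_diff_left_eq)
  ultimately show ?thesis
    using True assms i_eq by (simp add: S_X mul_X_X act_X mod_minus_eq)
next
  case False
  let ?n = "int N"
  have k: "k \<in> ZN N" and l: "l \<in> ZN N" and r: "r \<in> ZN N"
    using assms(3) by (auto simp: Bas_def)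
  have "\<not> (i mod ?n = (l + r + (k - l)) mod ?n \<and> r mod ?n = 0 \<and> l mod ?n = (i + p) mod ?n)"
  proof
    assume h: "i mod ?n = (l + r + (k - l)) mod ?n \<and> r mod ?n = 0 \<and> l mod ?n = (i + p) mod ?n"
    then have "r = 0" "l = (i + p) mod ?n"
      using r l by (simp_all add: ZN_mod_eq)
    moreover from h have "k = i"
      using k assms(2) \<open>r = 0\<close> by (simp add: ZN_mod_eq)
    ultimately show False using False by simp
  qed
  then show ?thesis
    using False assms(1) by (auto simp: S_X mul_X_X act_X)
qed

lemma udelta_X:
  assumes "N > 0" "i \<in> ZN N"
  shows "udelta N \<omega> (X N i i s) a b
    = (\<Sum>w\<in>ZN N. \<Sum>q\<in>ZN N. if (w + q) mod int N = s mod int N then X N i i w a * X N i i q b else 0)"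
proof -
  let ?n = "int N"
  define K where "K = (\<lambda>u v. \<Sum>c\<in>Bas N. \<Sum>d\<in>Bas N.
    Rm N \<omega> c d * (mul N (Xb N u) (S N (Xb N d)) a * act N (Xb N c) (Xb N v) b))"
  have K_diag: "K (i mod ?n, i mod ?n, p mod ?n) ((i + p) mod ?n, (i + p) mod ?n, q mod ?n)
      = X N i i p a * X N i i q b" for p q
  proof -
    have "K (i mod ?n, i mod ?n, p mod ?n) ((i + p) mod ?n, (i + p) mod ?n, q mod ?n)
      = (\<Sum>x\<in>Bas N. (case x of (k, l, r) \<Rightarrow> \<omega> powi (- (r * (k - l)))) *
           (mul N (X N i i p) (S N (X N (fst (snd x)) (fst (snd x) + snd (snd x)) (fst x - fst (snd x)))) a
            * act N (X N (fst x) (fst (snd x)) (snd (snd x))) (X N (i + p) (i + p) q) b))"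
      unfolding K_def Rm_expand by (subst sum_Bas2_weighted_expand[OF assms(1)]) (simp add: Xb_mod)
    also have "\<dots> = (\<Sum>x\<in>Bas N. if x = (i, (i + p) mod ?n, 0) then X N i i p a * X N i i q b else 0)"
      using assms by (intro sum.cong refl) (auto simp: udelta_X_summand)
    also have "\<dots> = X N i i p a * X N i i q b"
      using assms by (simp add: Bas_def mod_in_ZN ZN_def)
    finally show ?thesis .
  qed
  have "udelta N \<omega> (X N i i s) a b = (\<Sum>u\<in>Bas N. \<Sum>v\<in>Bas N. Delta N (X N i i s) u v * K u v)"
    unfolding udelta_def K_def by (simp add: sum_distrib_left mult.assoc)
  also have "\<dots> = (\<Sum>p\<in>ZN N. \<Sum>q\<in>ZN N. if (p + q) mod ?n = s mod ?n then
      K (i mod ?n, i mod ?n, p mod ?n) ((i + p) mod ?n, (i + p) mod ?n, q mod ?n) else 0)"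
    unfolding Delta_X[OF assms(1)] by (rule sum_Bas2_cond_expand[OF assms(1)])
  finally show ?thesis unfolding K_diag .
qed

text \<open>The factors \<open>1\<close> put \<open>one\<close> in the shape of the linearity lemmas above.\<close>

lemma one_as_sum: "one N = (\<lambda>t. \<Sum>k\<in>ZN N. 1 * (\<lambda>t. \<Sum>p\<in>ZN N. 1 * X N k k p t) t)"
  by (simp add: one_def)

lemma Delta_one: "Delta N (one N) u v = (\<Sum>k\<in>ZN N. \<Sum>p\<in>ZN N. Delta N (X N k k p) u v)"
  by (subst one_as_sum, simp only: Delta_sum) simp

lemma epst_X_summand:
  assumes "N > 0" "i \<in> ZN N" "s \<in> ZN N" "k \<in> ZN N" "p \<in> ZN N" "p1 \<in> ZN N" "q1 \<in> ZN N"
  shows "(if (p1 + q1) mod int N = p mod int N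
      then eps N (mul N (X N k k p1) (X N i i s)) * X N (k + p1) (k + p1) q1 t else 0)
    = (if q1 = p then if p1 = s then if k = i then (if s = 0 then X N i i p t else 0) else 0 else 0 else 0)"
proof -
  have "k mod int N = k" "p mod int N = p" "p1 mod int N = p1" "q1 mod int N = q1"
    "i mod int N = i" "s mod int N = s"
    using assms by (simp_all add: ZN_mod_eq)
  then show ?thesis
    using assms(1) by (auto simp: mul_X_X eps_X)
qed

lemma epst_X_apply:
  assumes "N > 0" "i \<in> ZN N" "s \<in> ZN N"
  shows "epst N (X N i i s) t = (if s = 0 then onei N i t else 0)"
proof -
  let ?n = "int N"
  define G where "G = (\<lambda>u v. eps N (mul N (Xb N u) (X N i i s)) * Xb N v t)"
  have "epst N (X N i i s) t = (\<Sum>u\<in>Bas N. \<Sum>v\<in>Bas N. \<Sum>k\<in>ZN N. \<Sum>p\<in>ZN N. Delta N (X N k k p) u v * G u v)"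
    by (simp add: epst_def G_def Delta_one sum_distrib_right mult.assoc)
  also have "\<dots> = (\<Sum>k\<in>ZN N. \<Sum>p\<in>ZN N. \<Sum>u\<in>Bas N. \<Sum>v\<in>Bas N. Delta N (X N k k p) u v * G u v)"
    by (rule sum_comm4)
  also have "\<dots> = (\<Sum>k\<in>ZN N. \<Sum>p\<in>ZN N. \<Sum>p1\<in>ZN N. \<Sum>q1\<in>ZN N. if (p1 + q1) mod ?n = p mod ?n then
       eps N (mul N (X N k k p1) (X N i i s)) * X N (k + p1) (k + p1) q1 t else 0)"
    unfolding Delta_X[OF assms(1)] by (simp only: sum_Bas2_cond_expand[OF assms(1)] G_def Xb_mod)
  also have "\<dots> = (\<Sum>k\<in>ZN N. \<Sum>p\<in>ZN N. \<Sum>p1\<in>ZN N. \<Sum>q1\<in>ZN N. if q1 = p then if p1 = s then if k = i then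
       (if s = 0 then X N i i p t else 0) else 0 else 0 else 0)"
    using assms by (intro sum.cong refl) (rule epst_X_summand)
  also have "\<dots> = (\<Sum>p\<in>ZN N. \<Sum>k\<in>ZN N. if k = i then (if s = 0 then X N i i p t else 0) else 0)"
    using assms by (simp add: sum.swap[of _ "ZN N"])
  also have "\<dots> = (if s = 0 then onei N i t else 0)"
    using assms by (simp add: onei_def)
  finally show ?thesis .
qed

lemma act_one_X:
  assumes "N > 0" "a \<in> ZN N" "b \<in> ZN N" "c \<in> ZN N"
  shows "act N (one N) (X N a b c) t = (if a = b then X N a a c t else 0)"
proof -
  have "act N (one N) (X N a b c) t = (\<Sum>k\<in>ZN N. \<Sum>p\<in>ZN N. act N (X N k k p) (X N a b c) t)"
    by (subst one_as_sum, simp only: act_sum_left) simp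
  also have "\<dots> = (\<Sum>k\<in>ZN N. \<Sum>p\<in>ZN N. if p = 0 then if k = a then (if a = b then X N a a c t else 0) else 0 else 0)"
    using assms by (intro sum.cong refl) (auto simp: act_X ZN_mod_eq)
  also have "\<dots> = (if a = b then X N a a c t else 0)"
    using assms by (simp add: ZN_def)
  finally show ?thesis .
qed

section \<open>Coordinates on \<open>H^i\<close>\<close>

definition Hi_elem :: "nat \<Rightarrow> int \<Rightarrow> (int \<Rightarrow> complex) \<Rightarrow> hel" where
  "Hi_elem N i c = (\<lambda>t. \<Sum>p\<in>ZN N. c p * X N i i p t)"

definition diag_idx :: "nat \<Rightarrow> int \<Rightarrow> idx \<Rightarrow> bool" where
  "diag_idx N i t \<longleftrightarrow> fst t = i \<and> fst (snd t) = i \<and> snd (snd t) \<in> ZN N"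

abbreviation idx_deg :: "idx \<Rightarrow> int" where "idx_deg t \<equiv> snd (snd t)"

lemma Hi_iff_Hi_elem: "x \<in> Hi N i \<longleftrightarrow> (\<exists>c. x = Hi_elem N i c)"
  by (simp add: Hi_def Hi_elem_def)

lemma sum_X_diag_mult:
  assumes "i \<in> ZN N"
  shows "(\<Sum>w\<in>ZN N. X N i i w a * F w) = (if diag_idx N i a then F (idx_deg a) else 0)"
proof (cases "diag_idx N i a")
  case True
  then obtain al where a: "a = (i, i, al)" "al \<in> ZN N" by (cases a) (auto simp: diag_idx_def)
  have "(\<Sum>w\<in>ZN N. X N i i w a * F w) = (\<Sum>w\<in>ZN N. if w = al then F w else 0)"
    by (rule sum.cong) (auto simp: X_diag_apply assms a)
  then show ?thesis using True a by simp
next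
  case False
  have "(\<Sum>w\<in>ZN N. X N i i w a * F w) = 0"
    by (rule sum.neutral) (use False assms in \<open>auto simp: X_diag_apply diag_idx_def\<close>)
  then show ?thesis using False by simp
qed

lemma Hi_elem_apply:
  assumes "i \<in> ZN N"
  shows "Hi_elem N i c t = (if diag_idx N i t then c (idx_deg t) else 0)"
  using sum_X_diag_mult[OF assms, of t c] by (simp add: Hi_elem_def mult.commute)

lemma Hi_elem_eq_iff:
  assumes "i \<in> ZN N"
  shows "Hi_elem N i c = Hi_elem N i d \<longleftrightarrow> (\<forall>p\<in>ZN N. c p = d p)"
proof
  assume h: "Hi_elem N i c = Hi_elem N i d"
  show "\<forall>p\<in>ZN N. c p = d p"
  proof
    fix p assume p: "p \<in> ZN N"
    have "Hi_elem N i c (i, i, p) = Hi_elem N i d (i, i, p)" using h by simp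
    then show "c p = d p" using p assms by (simp add: Hi_elem_apply diag_idx_def)
  qed
next
  assume "\<forall>p\<in>ZN N. c p = d p"
  then show "Hi_elem N i c = Hi_elem N i d" by (auto simp: Hi_elem_def intro!: sum.cong)
qed

lemma X_eq_Hi_elem:
  assumes "i \<in> ZN N" "w \<in> ZN N"
  shows "X N i i w = Hi_elem N i (\<lambda>p. if p = w then 1 else 0)"
  using assms by (auto simp: Hi_elem_apply X_diag_apply diag_idx_def)

lemma onei_eq_Hi_elem: "onei N i = Hi_elem N i (\<lambda>_. 1)" by (simp add: onei_def Hi_elem_def)

lemma Hi_elem_add: "(\<lambda>t. Hi_elem N i c t + Hi_elem N i d t) = Hi_elem N i (\<lambda>p. c p + d p)"
  by (simp add: Hi_elem_def sum.distrib algebra_simps)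

lemma Hi_elem_scale: "(\<lambda>t. k * Hi_elem N i c t) = Hi_elem N i (\<lambda>p. k * c p)"
  by (simp add: Hi_elem_def sum_distrib_left mult.assoc)

lemma Hi_elem_in_Hi [simp]: "Hi_elem N i c \<in> Hi N i" by (auto simp: Hi_iff_Hi_elem)

lemma ball_Hi_iff: "(\<forall>x\<in>Hi N i. P x) \<longleftrightarrow> (\<forall>c. P (Hi_elem N i c))"
  by (metis Hi_elem_in_Hi Hi_iff_Hi_elem)

lemma sum_Bas_diag_idx:
  fixes F :: "idx \<Rightarrow> complex"
  assumes "i \<in> ZN N"
  shows "(\<Sum>u\<in>Bas N. if diag_idx N i u then F u else 0) = (\<Sum>p\<in>ZN N. F (i, i, p))"
proof -
  have sub: "(\<lambda>p. (i, i, p)) ` ZN N \<subseteq> Bas N" using assms by (auto simp: Bas_def)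
  have "(\<Sum>u\<in>Bas N. if diag_idx N i u then F u else 0) = (\<Sum>u\<in>Bas N. if u \<in> (\<lambda>p. (i, i, p)) ` ZN N then F u else 0)"
    by (rule sum.cong) (auto simp: diag_idx_def image_iff)
  also have "\<dots> = (\<Sum>u\<in>(\<lambda>p. (i, i, p)) ` ZN N. F u)"
    using sub by (simp add: sum.If_cases Int_absorb1)
  also have "\<dots> = (\<Sum>p\<in>ZN N. F (i, i, p))"
    by (subst sum.reindex) (auto simp: inj_on_def)
  finally show ?thesis .
qed

lemma sum_Bas2_diag_idx:
  fixes f G :: "idx \<Rightarrow> idx \<Rightarrow> complex"
  assumes "i \<in> ZN N"
  shows "(\<Sum>u\<in>Bas N. \<Sum>v\<in>Bas N. (if diag_idx N i u \<and> diag_idx N i v then f u v else 0) * G u v)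
    = (\<Sum>w\<in>ZN N. \<Sum>q\<in>ZN N. f (i, i, w) (i, i, q) * G (i, i, w) (i, i, q))"
proof -
  have "(\<Sum>u\<in>Bas N. \<Sum>v\<in>Bas N. (if diag_idx N i u \<and> diag_idx N i v then f u v else 0) * G u v)
     = (\<Sum>u\<in>Bas N. if diag_idx N i u then (\<Sum>v\<in>Bas N. if diag_idx N i v then f u v * G u v else 0) else 0)"
    by (intro sum.cong refl) (auto intro!: sum.cong)
  also have "\<dots> = (\<Sum>w\<in>ZN N. \<Sum>q\<in>ZN N. f (i, i, w) (i, i, q) * G (i, i, w) (i, i, q))"
    using assms by (simp add: sum_Bas_diag_idx)
  finally show ?thesis .
qed

lemma X_diag_off_diag_idx:
  assumes "i \<in> ZN N" "q \<in> ZN N" "\<not> diag_idx N i t"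
  shows "X N i i q t = 0"
  using assms by (auto simp: X_diag_apply diag_idx_def)

lemma X_diag_at:
  assumes "i \<in> ZN N" "q \<in> ZN N" "al \<in> ZN N"
  shows "X N i i q (i, i, al) = (if q = al then 1 else 0)"
  using assms by (auto simp: X_diag_apply)

lemma Hi_choice:
  assumes "\<forall>i\<in>ZN N. xs i \<in> Hi N i"
  obtains C where "\<forall>i\<in>ZN N. xs i = Hi_elem N i (C i)"
proof -
  have "\<forall>i\<in>ZN N. \<exists>c. xs i = Hi_elem N i c" using assms by (simp add: Hi_iff_Hi_elem)
  then obtain C where "\<forall>i\<in>ZN N. xs i = Hi_elem N i (C i)" by metis
  then show ?thesis using that by blast
qed

lemma sum_cong_Hi_elem:
  assumes "\<forall>i\<in>ZN N. xs i = Hi_elem N i (C i)"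
  shows "(\<lambda>t. \<Sum>i\<in>ZN N. xs i t) = (\<lambda>t. \<Sum>i\<in>ZN N. Hi_elem N i (C i) t)"
  using assms by (auto intro!: sum.cong)

lemma sum_Hi_elem_diag_apply:
  assumes "i \<in> ZN N" "p \<in> ZN N"
  shows "(\<Sum>j\<in>ZN N. Hi_elem N j (c j) (i, i, p)) = c i p"
proof -
  have "(\<Sum>j\<in>ZN N. Hi_elem N j (c j) (i, i, p)) = (\<Sum>j\<in>ZN N. if j = i then c i p else 0)"
    using assms by (intro sum.cong refl) (auto simp: Hi_elem_apply diag_idx_def)
  then show ?thesis using assms by simp
qed

section \<open>The decomposition of \<open>_RH\<close>\<close>

lemma act_one_eq:
  assumes "N > 0" "x \<in> Hc N"
  shows "act N (one N) x = (\<lambda>t. \<Sum>i\<in>ZN N. Hi_elem N i (\<lambda>p. x (i, i, p)) t)"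
proof
  fix t
  have "act N (one N) x t = (\<Sum>w\<in>Bas N. x w * act N (one N) (Xb N w) t)"
    by (subst Hc_expand[OF assms(2)], rule act_sum_right)
  also have "\<dots> = (\<Sum>a\<in>ZN N. \<Sum>b\<in>ZN N. \<Sum>c\<in>ZN N. if a = b then x (a, a, c) * X N a a c t else 0)"
    unfolding sum_Bas_eq using assms(1) by (intro sum.cong refl) (auto simp: Xb_def act_one_X)
  also have "\<dots> = (\<Sum>a\<in>ZN N. \<Sum>b\<in>ZN N. if b = a then (\<Sum>c\<in>ZN N. x (a, a, c) * X N a a c t) else 0)"
    by (intro sum.cong refl) auto
  also have "\<dots> = (\<Sum>i\<in>ZN N. Hi_elem N i (\<lambda>p. x (i, i, p)) t)"
    by (simp add: Hi_elem_def)
  finally show "act N (one N) x t = (\<Sum>i\<in>ZN N. Hi_elem N i (\<lambda>p. x (i, i, p)) t)" .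
qed

lemma direct_sum_in_Hc: "(\<lambda>t. \<Sum>i\<in>ZN N. Hi_elem N i (C i) t) \<in> Hc N"
  unfolding Hc_def
proof (intro CollectI allI impI sum.neutral ballI)
  fix u i assume u: "u \<notin> Bas N" and i: "i \<in> ZN N"
  have "\<not> diag_idx N i u" using u i by (cases u) (auto simp: diag_idx_def Bas_def)
  then show "Hi_elem N i (C i) u = 0" using i by (simp add: Hi_elem_apply)
qed

lemma act_one_direct_sum:
  assumes "N > 0"
  shows "act N (one N) (\<lambda>t. \<Sum>i\<in>ZN N. Hi_elem N i (C i) t) = (\<lambda>t. \<Sum>i\<in>ZN N. Hi_elem N i (C i) t)"
  unfolding act_one_eq[OF assms direct_sum_in_Hc]
proof (intro ext sum.cong refl)
  fix t i assume i: "i \<in> ZN N"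
  have "Hi_elem N i (\<lambda>p. \<Sum>j\<in>ZN N. Hi_elem N j (C j) (i, i, p)) = Hi_elem N i (C i)"
    using i by (simp add: Hi_elem_eq_iff sum_Hi_elem_diag_apply)
  then show "Hi_elem N i (\<lambda>p. \<Sum>j\<in>ZN N. Hi_elem N j (C j) (i, i, p)) t = Hi_elem N i (C i) t"
    by simp
qed

lemma RH_eq_direct_sums:
  assumes "N > 0"
  shows "RH N = {(\<lambda>t. \<Sum>i\<in>ZN N. xs i t) | xs. \<forall>i\<in>ZN N. xs i \<in> Hi N i}"
proof
  show "RH N \<subseteq> {(\<lambda>t. \<Sum>i\<in>ZN N. xs i t) | xs. \<forall>i\<in>ZN N. xs i \<in> Hi N i}"
    using act_one_eq[OF assms] by (auto simp: RH_def)
  show "{(\<lambda>t. \<Sum>i\<in>ZN N. xs i t) | xs. \<forall>i\<in>ZN N. xs i \<in> Hi N i} \<subseteq> RH N"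
  proof
    fix x assume "x \<in> {(\<lambda>t. \<Sum>i\<in>ZN N. xs i t) | xs. \<forall>i\<in>ZN N. xs i \<in> Hi N i}"
    then obtain xs where xs: "\<forall>i\<in>ZN N. xs i \<in> Hi N i" "x = (\<lambda>t. \<Sum>i\<in>ZN N. xs i t)"
      by auto
    obtain C where "\<forall>i\<in>ZN N. xs i = Hi_elem N i (C i)"
      using Hi_choice[OF xs(1)] by blast
    then have "x = (\<lambda>t. \<Sum>i\<in>ZN N. Hi_elem N i (C i) t)"
      unfolding xs(2) by (rule sum_cong_Hi_elem)
    then show "x \<in> RH N"
      unfolding RH_def using act_one_direct_sum[OF assms, of C] direct_sum_in_Hc[of N C]
      by (metis (mono_tags, lifting) mem_Collect_eq)
  qed
qed

lemma direct_sum_unique: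
  assumes "\<forall>i\<in>ZN N. xs i \<in> Hi N i \<and> ys i \<in> Hi N i"
    and "(\<lambda>t. \<Sum>i\<in>ZN N. xs i t) = (\<lambda>t. \<Sum>i\<in>ZN N. ys i t)"
    and "i \<in> ZN N"
  shows "xs i = ys i"
proof -
  obtain C where C: "\<forall>i\<in>ZN N. xs i = Hi_elem N i (C i)"
    using Hi_choice[of N xs] assms(1) by blast
  obtain D where D: "\<forall>i\<in>ZN N. ys i = Hi_elem N i (D i)"
    using Hi_choice[of N ys] assms(1) by blast
  have sums_eq: "(\<lambda>t. \<Sum>i\<in>ZN N. Hi_elem N i (C i) t) = (\<lambda>t. \<Sum>i\<in>ZN N. Hi_elem N i (D i) t)"
    using assms(2) sum_cong_Hi_elem[OF C] sum_cong_Hi_elem[OF D] by simp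
  have "C i p = D i p" if p: "p \<in> ZN N" for p
  proof -
    have "(\<Sum>j\<in>ZN N. Hi_elem N j (C j) (i, i, p)) = (\<Sum>j\<in>ZN N. Hi_elem N j (D j) (i, i, p))"
      using fun_cong[OF sums_eq, of "(i, i, p)"] by simp
    then show ?thesis using assms(3) p by (simp add: sum_Hi_elem_diag_apply)
  qed
  then show "xs i = ys i" using C D assms(3) by (simp add: Hi_elem_eq_iff)
qed

section \<open>The Hopf algebras \<open>H^i\<close>\<close>

lemma mul_X_diag:
  assumes "N > 0" "i \<in> ZN N" "p \<in> ZN N" "q \<in> ZN N"
  shows "mul N (X N i i p) (X N i i q) = (if p = q then X N i i p else (\<lambda>_. 0))"
  using assms by (simp add: mul_X_X ZN_mod_eq)

lemma mul_X_diag_apply: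
  assumes "N > 0" "i \<in> ZN N" "p \<in> ZN N" "q \<in> ZN N"
  shows "mul N (X N i i p) (X N i i q) t = (if p = q then X N i i p t else 0)"
  using assms by (simp add: mul_X_X_apply ZN_mod_eq)

lemma mul_Hi_elem:
  assumes "N > 0" "i \<in> ZN N"
  shows "mul N (Hi_elem N i c) (Hi_elem N i d) = Hi_elem N i (\<lambda>p. c p * d p)"
proof
  fix t
  have "mul N (Hi_elem N i c) (Hi_elem N i d) t = (\<Sum>p\<in>ZN N. c p * (\<Sum>q\<in>ZN N. d q * mul N (X N i i p) (X N i i q) t))"
    unfolding Hi_elem_def mul_sum_left mul_sum_right ..
  also have "\<dots> = (\<Sum>p\<in>ZN N. c p * (\<Sum>q\<in>ZN N. if q = p then d p * X N i i p t else 0))"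
    using assms by (intro sum.cong refl arg_cong[where f="\<lambda>z. _ * z"]) (auto simp: mul_X_X_apply ZN_mod_eq)
  also have "\<dots> = Hi_elem N i (\<lambda>p. c p * d p) t" by (simp add: Hi_elem_def mult.assoc)
  finally show "mul N (Hi_elem N i c) (Hi_elem N i d) t = Hi_elem N i (\<lambda>p. c p * d p) t" .
qed

lemma udelta_X_apply:
  assumes "N > 0" "i \<in> ZN N" "s \<in> ZN N"
  shows "udelta N \<omega> (X N i i s) a b = (if diag_idx N i a \<and> diag_idx N i b \<and> (idx_deg a + idx_deg b) mod int N = s then 1 else 0)"
proof -
  have "udelta N \<omega> (X N i i s) a b = (\<Sum>w\<in>ZN N. X N i i w a * (\<Sum>q\<in>ZN N. X N i i q b * (if (w + q) mod int N = s then 1 else 0)))"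
    unfolding udelta_X[OF assms(1,2)] using assms(3) by (auto simp: ZN_mod_eq sum_distrib_left intro!: sum.cong)
  then show ?thesis using assms by (simp add: sum_X_diag_mult)
qed

lemma udelta_Hi_elem:
  assumes "N > 0" "i \<in> ZN N"
  shows "udelta N \<omega> (Hi_elem N i c) a b = (if diag_idx N i a \<and> diag_idx N i b then c ((idx_deg a + idx_deg b) mod int N) else 0)"
proof -
  have "udelta N \<omega> (Hi_elem N i c) a b = (\<Sum>p\<in>ZN N. c p * udelta N \<omega> (X N i i p) a b)"
    unfolding Hi_elem_def udelta_sum ..
  also have "\<dots> = (\<Sum>p\<in>ZN N. if p = (idx_deg a + idx_deg b) mod int N then (if diag_idx N i a \<and> diag_idx N i b then c p else 0) else 0)"
    using assms by (intro sum.cong refl) (auto simp: udelta_X_apply)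
  also have "\<dots> = (if diag_idx N i a \<and> diag_idx N i b then c ((idx_deg a + idx_deg b) mod int N) else 0)"
    using assms by (simp add: mod_in_ZN)
  finally show ?thesis .
qed

lemma epst_X:
  assumes "N > 0" "i \<in> ZN N" "s \<in> ZN N"
  shows "epst N (X N i i s) = (if s = 0 then onei N i else (\<lambda>_. 0))"
  using epst_X_apply[OF assms] by auto

lemma epst_Hi_elem:
  assumes "N > 0" "i \<in> ZN N"
  shows "epst N (Hi_elem N i c) = Hi_elem N i (\<lambda>_. c 0)"
proof
  fix t
  have "epst N (Hi_elem N i c) t = (\<Sum>p\<in>ZN N. c p * epst N (X N i i p) t)"
    unfolding Hi_elem_def epst_sum ..
  also have "\<dots> = (\<Sum>p\<in>ZN N. if p = 0 then c 0 * onei N i t else 0)"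
    using assms by (intro sum.cong refl) (auto simp: epst_X_apply)
  also have "\<dots> = Hi_elem N i (\<lambda>_. c 0) t"
    using assms by (simp add: onei_def Hi_elem_def ZN_def sum_distrib_left)
  finally show "epst N (Hi_elem N i c) t = Hi_elem N i (\<lambda>_. c 0) t" .
qed

lemma Santi_X:
  assumes "i \<in> ZN N" "s \<in> ZN N"
  shows "Santi N i (X N i i s) = X N i i (- s)"
proof
  fix t
  have "Santi N i (X N i i s) t = (\<Sum>p\<in>ZN N. if p = s then X N i i (- p) t else 0)"
    unfolding Santi_def using assms by (intro sum.cong refl) (simp add: X_diag_apply)
  then show "Santi N i (X N i i s) t = X N i i (- s) t" using assms by simp
qed

lemma neg_mod_eq_iff:
  assumes "p \<in> ZN N" "al \<in> ZN N"
  shows "(- p) mod int N = al \<longleftrightarrow> p = (- al) mod int N"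
proof
  assume "(- p) mod int N = al"
  then have "al mod int N = (- p) mod int N" using assms by (simp add: ZN_mod_eq)
  then have "(- al) mod int N = p mod int N" by (metis minus_minus mod_minus_cong)
  then show "p = (- al) mod int N" using assms by (simp add: ZN_mod_eq)
next
  assume "p = (- al) mod int N"
  then show "(- p) mod int N = al" using assms by (simp add: mod_minus_eq ZN_mod_eq)
qed

lemma Santi_Hi_elem:
  assumes "N > 0" "i \<in> ZN N"
  shows "Santi N i (Hi_elem N i c) = Hi_elem N i (\<lambda>p. c ((- p) mod int N))"
proof
  fix t
  show "Santi N i (Hi_elem N i c) t = Hi_elem N i (\<lambda>p. c ((- p) mod int N)) t"
  proof (cases "diag_idx N i t")
    case True
    then obtain al where t: "t = (i, i, al)" "al \<in> ZN N" by (cases t) (auto simp: diag_idx_def)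
    have "Santi N i (Hi_elem N i c) t = (\<Sum>p\<in>ZN N. if p = (- al) mod int N then c p else 0)"
      unfolding Santi_def
    proof (intro sum.cong refl)
      fix p assume p: "p \<in> ZN N"
      have "X N i i (- p) t = (if p = (- al) mod int N then 1 else 0)"
        using t neg_mod_eq_iff[OF p t(2)] unfolding X_def ZN_mod_eq[OF assms(2)] by auto
      then show "Hi_elem N i c (i, i, p) * X N i i (- p) t = (if p = (- al) mod int N then c p else 0)"
        using assms p by (simp add: Hi_elem_apply diag_idx_def)
    qed
    also have "\<dots> = c ((- al) mod int N)" using assms by (simp add: mod_in_ZN)
    finally show ?thesis using assms t by (simp add: Hi_elem_apply diag_idx_def)
  next
    case False
    have "Santi N i (Hi_elem N i c) t = 0"
      unfolding Santi_def using assms False by (intro sum.neutral) (auto simp: X_def diag_idx_def mod_in_ZN ZN_mod_eq)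
    then show ?thesis using False assms by (simp add: Hi_elem_apply)
  qed
qed

lemma iota_Hi_elem:
  assumes "i \<in> ZN N" "j \<in> ZN N"
  shows "iota N i j (Hi_elem N i c) = Hi_elem N j c"
  unfolding iota_def Hi_elem_def using assms
  by (intro ext sum.cong refl) (simp add: Hi_elem_apply[OF assms(1), unfolded Hi_elem_def] diag_idx_def)

lemma mul_onei_X:
  assumes "N > 0" "i \<in> ZN N" "q \<in> ZN N"
  shows "mul N (onei N i) (X N i i q) = X N i i q" "mul N (X N i i q) (onei N i) = X N i i q"
  using assms by (simp_all add: onei_eq_Hi_elem X_eq_Hi_elem mul_Hi_elem)

lemma sum_X_neg_eq_onei:
  assumes "N > 0" "i \<in> ZN N"
  shows "(\<Sum>w\<in>ZN N. X N i i (- w) t) = onei N i t"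
proof -
  have "Santi N i (onei N i) = onei N i"
    using Santi_Hi_elem[OF assms, of "\<lambda>_. 1"] by (simp add: onei_eq_Hi_elem)
  then have "Santi N i (onei N i) t = onei N i t" by simp
  moreover have "Santi N i (onei N i) t = (\<Sum>w\<in>ZN N. X N i i (- w) t)"
    unfolding Santi_def using assms by (intro sum.cong refl) (simp add: onei_eq_Hi_elem Hi_elem_apply diag_idx_def)
  ultimately show ?thesis by simp
qed

lemma add_neg_mod_eq_0: "((w::int) + (- w) mod n) mod n = 0"
  by (simp add: mod_add_right_eq)

lemma conv_udelta_Hi_elem:
  assumes "N > 0" "i \<in> ZN N"
  shows "conv N m f g (udelta N \<omega> (Hi_elem N i c)) t = (\<Sum>w\<in>ZN N. \<Sum>q\<in>ZN N. c ((w + q) mod int N) * m (f (X N i i w)) (g (X N i i q)) t)"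
proof -
  have "conv N m f g (udelta N \<omega> (Hi_elem N i c)) t = (\<Sum>u\<in>Bas N. \<Sum>v\<in>Bas N. (if diag_idx N i u \<and> diag_idx N i v then c ((idx_deg u + idx_deg v) mod int N) else 0) * m (f (Xb N u)) (g (Xb N v)) t)"
    unfolding conv_def by (simp add: udelta_Hi_elem assms)
  then show ?thesis by (simp add: sum_Bas2_diag_idx assms Xb_diag)
qed

lemma mult_if_1_0_right [simp]: "(x::complex) * (if P then 1 else 0) = (if P then x else 0)"
  and mult_if_1_0_left [simp]: "(if P then 1 else 0) * (x::complex) = (if P then x else 0)"
  by simp_all

lemma lin_l_udelta_Hi_elem:
  assumes "N > 0" "i \<in> ZN N"
  shows "lin_l N (udelta N \<omega>) (udelta N \<omega> (Hi_elem N i c)) a b d = (if diag_idx N i a \<and> diag_idx N i b \<and> diag_idx N i d then c ((idx_deg a + idx_deg b + idx_deg d) mod int N) else 0)"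
proof -
  have "lin_l N (udelta N \<omega>) (udelta N \<omega> (Hi_elem N i c)) a b d = (\<Sum>w\<in>ZN N. \<Sum>q\<in>ZN N. c ((w + q) mod int N) * (udelta N \<omega> (X N i i w) a b * X N i i q d))"
    unfolding lin_l_def udelta_Hi_elem[OF assms] mult.assoc sum_Bas2_diag_idx[OF assms(2)] Xb_diag by (simp only: snd_conv)
  also have "\<dots> = (if diag_idx N i a \<and> diag_idx N i b \<and> diag_idx N i d then c ((idx_deg a + idx_deg b + idx_deg d) mod int N) else 0)"
  proof (cases "diag_idx N i a \<and> diag_idx N i b \<and> diag_idx N i d")
    case True
    then obtain al be ga where abd: "a = (i, i, al)" "b = (i, i, be)" "d = (i, i, ga)" "al \<in> ZN N" "be \<in> ZN N" "ga \<in> ZN N"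
      by (cases a, cases b, cases d) (auto simp: diag_idx_def)
    have "(\<Sum>w\<in>ZN N. \<Sum>q\<in>ZN N. c ((w + q) mod int N) * (udelta N \<omega> (X N i i w) a b * X N i i q d))
       = (\<Sum>w\<in>ZN N. if w = (al + be) mod int N then (\<Sum>q\<in>ZN N. if q = ga then c ((w + q) mod int N) else 0) else 0)"
      using assms abd by (intro sum.cong refl) (auto simp: udelta_X_apply X_diag_at diag_idx_def)
    also have "\<dots> = c (((al + be) mod int N + ga) mod int N)" using assms abd by (simp add: mod_in_ZN)
    also have "\<dots> = c ((al + be + ga) mod int N)" by (simp add: mod_add_left_eq)
    finally show ?thesis using True abd by simp
  next
    case False
    have "(\<Sum>w\<in>ZN N. \<Sum>q\<in>ZN N. c ((w + q) mod int N) * (udelta N \<omega> (X N i i w) a b * X N i i q d)) = 0"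
      using assms False by (intro sum.neutral ballI) (auto simp: udelta_X_apply X_diag_off_diag_idx)
    then show ?thesis using False by auto
  qed
  finally show ?thesis .
qed

lemma lin_r_udelta_Hi_elem:
  assumes "N > 0" "i \<in> ZN N"
  shows "lin_r N (udelta N \<omega>) (udelta N \<omega> (Hi_elem N i c)) a b d = (if diag_idx N i a \<and> diag_idx N i b \<and> diag_idx N i d then c ((idx_deg a + idx_deg b + idx_deg d) mod int N) else 0)"
proof -
  have "lin_r N (udelta N \<omega>) (udelta N \<omega> (Hi_elem N i c)) a b d = (\<Sum>w\<in>ZN N. \<Sum>q\<in>ZN N. c ((w + q) mod int N) * (X N i i w a * udelta N \<omega> (X N i i q) b d))"
    unfolding lin_r_def udelta_Hi_elem[OF assms] mult.assoc sum_Bas2_diag_idx[OF assms(2)] Xb_diag by (simp only: snd_conv)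
  also have "\<dots> = (if diag_idx N i a \<and> diag_idx N i b \<and> diag_idx N i d then c ((idx_deg a + idx_deg b + idx_deg d) mod int N) else 0)"
  proof (cases "diag_idx N i a \<and> diag_idx N i b \<and> diag_idx N i d")
    case True
    then obtain al be ga where abd: "a = (i, i, al)" "b = (i, i, be)" "d = (i, i, ga)" "al \<in> ZN N" "be \<in> ZN N" "ga \<in> ZN N"
      by (cases a, cases b, cases d) (auto simp: diag_idx_def)
    have "(\<Sum>w\<in>ZN N. \<Sum>q\<in>ZN N. c ((w + q) mod int N) * (X N i i w a * udelta N \<omega> (X N i i q) b d))
       = (\<Sum>w\<in>ZN N. if w = al then (\<Sum>q\<in>ZN N. if q = (be + ga) mod int N then c ((w + q) mod int N) else 0) else 0)"
      using assms abd by (intro sum.cong refl) (auto simp: udelta_X_apply X_diag_at diag_idx_def)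
    also have "\<dots> = c ((al + (be + ga) mod int N) mod int N)" using assms abd by (simp add: mod_in_ZN)
    also have "\<dots> = c ((al + be + ga) mod int N)" by (simp add: mod_add_right_eq add.assoc)
    finally show ?thesis using True abd by simp
  next
    case False
    have "(\<Sum>w\<in>ZN N. \<Sum>q\<in>ZN N. c ((w + q) mod int N) * (X N i i w a * udelta N \<omega> (X N i i q) b d)) = 0"
      using assms False by (intro sum.neutral ballI) (auto simp: udelta_X_apply X_diag_off_diag_idx)
    then show ?thesis using False by auto
  qed
  finally show ?thesis .
qed

lemma mul2_udelta_Hi_elem:
  assumes "N > 0" "i \<in> ZN N"
  shows "mul2 N (mul N) (udelta N \<omega> (Hi_elem N i c)) (udelta N \<omega> (Hi_elem N i d)) a b
     = (if diag_idx N i a \<and> diag_idx N i b then c ((idx_deg a + idx_deg b) mod int N) * d ((idx_deg a + idx_deg b) mod int N) else 0)"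
proof -
  have "mul2 N (mul N) (udelta N \<omega> (Hi_elem N i c)) (udelta N \<omega> (Hi_elem N i d)) a b
    = (\<Sum>u\<in>Bas N. \<Sum>v\<in>Bas N. udelta N \<omega> (Hi_elem N i c) u v * (\<Sum>w\<in>Bas N. \<Sum>z\<in>Bas N. udelta N \<omega> (Hi_elem N i d) w z * (mul N (Xb N u) (Xb N w) a * mul N (Xb N v) (Xb N z) b)))"
    unfolding mul2_def by (simp add: sum_distrib_left mult.assoc)
  also have "\<dots> = (\<Sum>w1\<in>ZN N. \<Sum>q1\<in>ZN N. c ((w1 + q1) mod int N) * (\<Sum>w2\<in>ZN N. \<Sum>q2\<in>ZN N. d ((w2 + q2) mod int N) * (mul N (X N i i w1) (X N i i w2) a * mul N (X N i i q1) (X N i i q2) b)))"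
    unfolding udelta_Hi_elem[OF assms] sum_Bas2_diag_idx[OF assms(2)] Xb_diag by (simp only: snd_conv)
  also have "\<dots> = (if diag_idx N i a \<and> diag_idx N i b then c ((idx_deg a + idx_deg b) mod int N) * d ((idx_deg a + idx_deg b) mod int N) else 0)"
  proof (cases "diag_idx N i a \<and> diag_idx N i b")
    case True
    then obtain al be where ab: "a = (i, i, al)" "b = (i, i, be)" "al \<in> ZN N" "be \<in> ZN N"
      by (cases a, cases b) (auto simp: diag_idx_def)
    have "(\<Sum>w1\<in>ZN N. \<Sum>q1\<in>ZN N. c ((w1 + q1) mod int N) * (\<Sum>w2\<in>ZN N. \<Sum>q2\<in>ZN N. d ((w2 + q2) mod int N) * (mul N (X N i i w1) (X N i i w2) a * mul N (X N i i q1) (X N i i q2) b)))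
      = (\<Sum>w1\<in>ZN N. if w1 = al then (\<Sum>q1\<in>ZN N. if q1 = be then c ((w1 + q1) mod int N) * (\<Sum>w2\<in>ZN N. if w2 = al then (\<Sum>q2\<in>ZN N. if q2 = be then d ((w2 + q2) mod int N) else 0) else 0) else 0) else 0)"
    proof -
      have key: "mul N (X N i i w1) (X N i i w2) (i, i, al) * mul N (X N i i q1) (X N i i q2) (i, i, be)
         = (if q2 = be then if w2 = al then if q1 = be then if w1 = al then 1 else 0 else 0 else 0 else 0)"
        if "w1 \<in> ZN N" "q1 \<in> ZN N" "w2 \<in> ZN N" "q2 \<in> ZN N" for w1 q1 w2 q2
        using assms ab that by (simp add: mul_X_diag_apply X_diag_at)
      have m0: "(x::complex) * (if P then y else 0) = (if P then x * y else 0)" for x y P by simp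
      show ?thesis using ab by (simp add: key m0 cong: sum.cong_simp)
    qed
    then show ?thesis using ab True by simp
  next
    case False
    have "(\<Sum>w1\<in>ZN N. \<Sum>q1\<in>ZN N. c ((w1 + q1) mod int N) * (\<Sum>w2\<in>ZN N. \<Sum>q2\<in>ZN N. d ((w2 + q2) mod int N) * (mul N (X N i i w1) (X N i i w2) a * mul N (X N i i q1) (X N i i q2) b))) = 0"
    proof -
      have key: "mul N (X N i i w1) (X N i i w2) a * mul N (X N i i q1) (X N i i q2) b = 0"
        if "w1 \<in> ZN N" "q1 \<in> ZN N" "w2 \<in> ZN N" "q2 \<in> ZN N" for w1 q1 w2 q2
        using assms False that by (auto simp: mul_X_diag_apply X_diag_off_diag_idx)
      show ?thesis by (simp add: key cong: sum.cong_simp)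
    qed
    then show ?thesis using False by auto
  qed
  finally show ?thesis .
qed

lemma Hi_algebra:
  assumes "N > 0" "i \<in> ZN N"
  shows "is_subspace (Hi N i) \<and> onei N i \<in> Hi N i
   \<and> (\<forall>x\<in>Hi N i. \<forall>y\<in>Hi N i. mul N x y \<in> Hi N i)
   \<and> (\<forall>z\<in>Hi N i. lin_on (Hi N i) (\<lambda>x. mul N x z) \<and> lin_on (Hi N i) (\<lambda>x. mul N z x))
   \<and> (\<forall>x\<in>Hi N i. \<forall>y\<in>Hi N i. \<forall>z\<in>Hi N i. mul N (mul N x y) z = mul N x (mul N y z))
   \<and> (\<forall>x\<in>Hi N i. mul N (onei N i) x = x \<and> mul N x (onei N i) = x)"
proof (intro conjI)
  have z: "(\<lambda>_. 0) \<in> Hi N i" using Hi_elem_in_Hi[of N i "\<lambda>_. 0"] by (simp add: Hi_elem_def)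
  show "is_subspace (Hi N i)"
    unfolding is_subspace_def ball_Hi_iff using z by (simp add: Hi_elem_add Hi_elem_scale)
  show "onei N i \<in> Hi N i" by (simp add: onei_eq_Hi_elem)
  show "\<forall>x\<in>Hi N i. \<forall>y\<in>Hi N i. mul N x y \<in> Hi N i" unfolding ball_Hi_iff by (simp add: mul_Hi_elem assms)
  show "\<forall>z\<in>Hi N i. lin_on (Hi N i) (\<lambda>x. mul N x z) \<and> lin_on (Hi N i) (\<lambda>x. mul N z x)"
    unfolding ball_Hi_iff lin_on_def by (simp add: Hi_elem_add Hi_elem_scale mul_Hi_elem assms algebra_simps)
  show "\<forall>x\<in>Hi N i. \<forall>y\<in>Hi N i. \<forall>z\<in>Hi N i. mul N (mul N x y) z = mul N x (mul N y z)"
    unfolding ball_Hi_iff by (simp add: mul_Hi_elem assms mult.assoc)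
  show "\<forall>x\<in>Hi N i. mul N (onei N i) x = x \<and> mul N x (onei N i) = x"
    unfolding ball_Hi_iff by (simp add: mul_Hi_elem onei_eq_Hi_elem assms)
qed

lemma udelta_Hi_elem_in_Tens2:
  assumes "N > 0" "i \<in> ZN N"
  shows "udelta N \<omega> (Hi_elem N i c) \<in> Tens2 (Hi N i)"
proof -
  let ?f = "\<lambda>k::nat. X N i i (int k)"
  let ?g = "\<lambda>k::nat. Hi_elem N i (\<lambda>q. c ((int k + q) mod int N))"
  have sum_form: "udelta N \<omega> (Hi_elem N i c) = (\<lambda>a b. \<Sum>k<N. tens (?f k) (?g k) a b)"
  proof (intro ext)
    fix a b
    have "(\<Sum>k<N. tens (?f k) (?g k) a b) = (\<Sum>w\<in>ZN N. X N i i w a * Hi_elem N i (\<lambda>q. c ((w + q) mod int N)) b)"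
      unfolding tens_def by (rule sum_ZN_eq_sum_lessThan[symmetric])
    also have "\<dots> = udelta N \<omega> (Hi_elem N i c) a b"
      using assms by (simp add: sum_X_diag_mult udelta_Hi_elem Hi_elem_apply)
    finally show "udelta N \<omega> (Hi_elem N i c) a b = (\<Sum>k<N. tens (?f k) (?g k) a b)" by simp
  qed
  have "\<forall>k<N. ?f k \<in> Hi N i \<and> ?g k \<in> Hi N i"
    using assms by (simp add: X_eq_Hi_elem ZN_def)
  then show ?thesis
    unfolding Tens2_def mem_Collect_eq sum_form by (intro exI[of _ N] exI[of _ ?f] exI[of _ ?g]) simp
qed

lemma Hi_coalgebra:
  assumes "N > 0" "i \<in> ZN N"
  shows "lin_on2 (Hi N i) (udelta N \<omega>) \<and> (\<forall>x\<in>Hi N i. udelta N \<omega> x \<in> Tens2 (Hi N i))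
   \<and> (\<forall>x\<in>Hi N i. lin_l N (udelta N \<omega>) (udelta N \<omega> x) = lin_r N (udelta N \<omega>) (udelta N \<omega> x))"
  unfolding lin_on2_def ball_Hi_iff
  using assms udelta_Hi_elem_in_Tens2[OF assms]
  by (simp add: Hi_elem_add Hi_elem_scale udelta_Hi_elem lin_l_udelta_Hi_elem lin_r_udelta_Hi_elem fun_eq_iff)

lemma counit_left_Hi_elem:
  assumes "N > 0" "i \<in> ZN N"
  shows "conv N (mul N) (epst N) id (udelta N \<omega> (Hi_elem N i c)) = Hi_elem N i c"
proof
  fix t
  have "conv N (mul N) (epst N) id (udelta N \<omega> (Hi_elem N i c)) t = (\<Sum>w\<in>ZN N. if w = 0 then (\<Sum>q\<in>ZN N. c q * X N i i q t) else 0)"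
    unfolding conv_udelta_Hi_elem[OF assms] using assms
    by (intro sum.cong refl) (auto simp: epst_X mul_onei_X ZN_mod_eq intro!: sum.cong)
  also have "\<dots> = Hi_elem N i c t" using assms by (simp add: Hi_elem_def ZN_def)
  finally show "conv N (mul N) (epst N) id (udelta N \<omega> (Hi_elem N i c)) t = Hi_elem N i c t" .
qed

lemma counit_right_Hi_elem:
  assumes "N > 0" "i \<in> ZN N"
  shows "conv N (mul N) id (epst N) (udelta N \<omega> (Hi_elem N i c)) = Hi_elem N i c"
proof
  fix t
  have "conv N (mul N) id (epst N) (udelta N \<omega> (Hi_elem N i c)) t = (\<Sum>w\<in>ZN N. \<Sum>q\<in>ZN N. if q = 0 then c w * X N i i w t else 0)"
    unfolding conv_udelta_Hi_elem[OF assms] using assms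
    by (intro sum.cong refl) (auto simp: epst_X mul_onei_X ZN_mod_eq)
  also have "\<dots> = Hi_elem N i c t" using assms by (simp add: Hi_elem_def ZN_def)
  finally show "conv N (mul N) id (epst N) (udelta N \<omega> (Hi_elem N i c)) t = Hi_elem N i c t" .
qed

lemma antipode_left_Hi_elem:
  assumes "N > 0" "i \<in> ZN N"
  shows "conv N (mul N) (Santi N i) id (udelta N \<omega> (Hi_elem N i c)) = epst N (Hi_elem N i c)"
proof
  fix t
  have "conv N (mul N) (Santi N i) id (udelta N \<omega> (Hi_elem N i c)) t = (\<Sum>w\<in>ZN N. \<Sum>q\<in>ZN N. if q = (- w) mod int N then c ((w + q) mod int N) * X N i i (- w) t else 0)"
    unfolding conv_udelta_Hi_elem[OF assms] using assms
    by (intro sum.cong refl) (auto simp: Santi_X mul_X_X_apply ZN_mod_eq)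
  also have "\<dots> = (\<Sum>w\<in>ZN N. c 0 * X N i i (- w) t)"
    using assms by (intro sum.cong refl) (simp add: mod_in_ZN add_neg_mod_eq_0)
  also have "\<dots> = c 0 * onei N i t" using assms by (simp add: sum_distrib_left[symmetric] sum_X_neg_eq_onei)
  also have "\<dots> = epst N (Hi_elem N i c) t" unfolding epst_Hi_elem[OF assms] by (simp add: onei_def Hi_elem_def sum_distrib_left)
  finally show "conv N (mul N) (Santi N i) id (udelta N \<omega> (Hi_elem N i c)) t = epst N (Hi_elem N i c) t" .
qed

lemma antipode_right_Hi_elem:
  assumes "N > 0" "i \<in> ZN N"
  shows "conv N (mul N) id (Santi N i) (udelta N \<omega> (Hi_elem N i c)) = epst N (Hi_elem N i c)"
proof
  fix t
  have "conv N (mul N) id (Santi N i) (udelta N \<omega> (Hi_elem N i c)) t = (\<Sum>w\<in>ZN N. \<Sum>q\<in>ZN N. if q = (- w) mod int N then c ((w + q) mod int N) * X N i i w t else 0)"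
    unfolding conv_udelta_Hi_elem[OF assms]
  proof (intro sum.cong refl)
    fix w q assume w: "w \<in> ZN N" and q: "q \<in> ZN N"
    have "(w = (- q) mod int N) \<longleftrightarrow> (q = (- w) mod int N)" using neg_mod_eq_iff[OF q w] by auto
    then show "c ((w + q) mod int N) * mul N (id (X N i i w)) (Santi N i (X N i i q)) t
      = (if q = (- w) mod int N then c ((w + q) mod int N) * X N i i w t else 0)"
      using assms w q by (auto simp: Santi_X mul_X_X_apply ZN_mod_eq)
  qed
  also have "\<dots> = (\<Sum>w\<in>ZN N. c 0 * X N i i w t)"
    using assms by (intro sum.cong refl) (simp add: mod_in_ZN add_neg_mod_eq_0)
  also have "\<dots> = c 0 * onei N i t" using assms by (simp add: sum_distrib_left[symmetric] onei_def)
  also have "\<dots> = epst N (Hi_elem N i c) t" unfolding epst_Hi_elem[OF assms] by (simp add: onei_def Hi_elem_def sum_distrib_left)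
  finally show "conv N (mul N) id (Santi N i) (udelta N \<omega> (Hi_elem N i c)) t = epst N (Hi_elem N i c) t" .
qed

lemma hopf_over_Hi:
  assumes "N > 0" "i \<in> ZN N"
  shows "hopf_over N (Hi N i) (onei N i) (mul N) (udelta N \<omega>) (epst N) (Santi N i)"
  unfolding hopf_over_def
proof (intro conjI)
  note A = Hi_algebra[OF assms] and C = Hi_coalgebra[OF assms, of \<omega>]
  show "is_subspace (Hi N i)" "onei N i \<in> Hi N i"
     "\<forall>x\<in>Hi N i. \<forall>y\<in>Hi N i. mul N x y \<in> Hi N i"
     "\<forall>z\<in>Hi N i. lin_on (Hi N i) (\<lambda>x. mul N x z) \<and> lin_on (Hi N i) (\<lambda>x. mul N z x)"
     "\<forall>x\<in>Hi N i. \<forall>y\<in>Hi N i. \<forall>z\<in>Hi N i. mul N (mul N x y) z = mul N x (mul N y z)"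
     "\<forall>x\<in>Hi N i. mul N (onei N i) x = x \<and> mul N x (onei N i) = x"
    using A by auto
  show "lin_on2 (Hi N i) (udelta N \<omega>)" "\<forall>x\<in>Hi N i. udelta N \<omega> x \<in> Tens2 (Hi N i)"
     "\<forall>x\<in>Hi N i. lin_l N (udelta N \<omega>) (udelta N \<omega> x) = lin_r N (udelta N \<omega>) (udelta N \<omega> x)"
    using C by auto
  show "lin_on (Hi N i) (epst N)"
    unfolding lin_on_def ball_Hi_iff by (simp add: epst_Hi_elem assms Hi_elem_add Hi_elem_scale)
  show "\<forall>x\<in>Hi N i. \<exists>c. epst N x = (\<lambda>t. c * onei N i t)"
    unfolding ball_Hi_iff onei_eq_Hi_elem by (simp add: epst_Hi_elem assms Hi_elem_scale) blast
  show "\<forall>x\<in>Hi N i. conv N (mul N) (epst N) id (udelta N \<omega> x) = x \<and> conv N (mul N) id (epst N) (udelta N \<omega> x) = x"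
    unfolding ball_Hi_iff by (simp add: counit_left_Hi_elem counit_right_Hi_elem assms)
  show "udelta N \<omega> (onei N i) = tens (onei N i) (onei N i)"
    unfolding onei_eq_Hi_elem by (simp add: fun_eq_iff udelta_Hi_elem assms tens_def Hi_elem_apply)
  show "\<forall>x\<in>Hi N i. \<forall>y\<in>Hi N i. udelta N \<omega> (mul N x y) = mul2 N (mul N) (udelta N \<omega> x) (udelta N \<omega> y)"
    unfolding ball_Hi_iff by (simp add: fun_eq_iff udelta_Hi_elem mul2_udelta_Hi_elem mul_Hi_elem assms)
  show "epst N (onei N i) = onei N i" unfolding onei_eq_Hi_elem by (simp add: epst_Hi_elem assms)
  show "\<forall>x\<in>Hi N i. \<forall>y\<in>Hi N i. epst N (mul N x y) = mul N (epst N x) (epst N y)"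
    unfolding ball_Hi_iff by (simp add: epst_Hi_elem mul_Hi_elem assms)
  show "lin_on (Hi N i) (Santi N i)"
    unfolding lin_on_def ball_Hi_iff by (simp add: Santi_Hi_elem assms Hi_elem_add Hi_elem_scale)
  show "\<forall>x\<in>Hi N i. Santi N i x \<in> Hi N i"
    unfolding ball_Hi_iff by (simp add: Santi_Hi_elem assms)
  show "\<forall>x\<in>Hi N i. conv N (mul N) (Santi N i) id (udelta N \<omega> x) = epst N x \<and> conv N (mul N) id (Santi N i) (udelta N \<omega> x) = epst N x"
    unfolding ball_Hi_iff by (simp add: antipode_left_Hi_elem antipode_right_Hi_elem assms)
qed

lemma iota_X:
  assumes "i \<in> ZN N" "j \<in> ZN N" "w \<in> ZN N"
  shows "iota N i j (X N i i w) = X N j j w"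
  using assms by (simp add: X_eq_Hi_elem iota_Hi_elem)

lemma bij_betw_iota:
  assumes "i \<in> ZN N" "j \<in> ZN N"
  shows "bij_betw (iota N i j) (Hi N i) (Hi N j)"
  using assms
  by (intro bij_betw_byWitness[where f'="iota N j i"]) (auto simp: Hi_iff_Hi_elem iota_Hi_elem, blast+)

lemma udelta_iota_Hi_elem:
  assumes "N > 0" "i \<in> ZN N" "j \<in> ZN N"
  shows "udelta N \<omega> (iota N i j (Hi_elem N i c)) = map2 N (iota N i j) (iota N i j) (udelta N \<omega> (Hi_elem N i c))"
proof (intro ext)
  fix a b
  have "map2 N (iota N i j) (iota N i j) (udelta N \<omega> (Hi_elem N i c)) a b
    = (\<Sum>w\<in>ZN N. \<Sum>q\<in>ZN N. c ((w + q) mod int N) * (iota N i j (X N i i w) a * iota N i j (X N i i q) b))"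
    unfolding map2_def udelta_Hi_elem[OF assms(1,2)] mult.assoc sum_Bas2_diag_idx[OF assms(2)] Xb_diag
    by (simp only: snd_conv)
  also have "\<dots> = (\<Sum>w\<in>ZN N. X N j j w a * (\<Sum>q\<in>ZN N. X N j j q b * c ((w + q) mod int N)))"
    using assms by (intro sum.cong refl) (simp add: iota_X sum_distrib_left mult.commute mult.left_commute)
  also have "\<dots> = udelta N \<omega> (iota N i j (Hi_elem N i c)) a b"
    using assms by (simp add: sum_X_diag_mult iota_Hi_elem udelta_Hi_elem)
  finally show "udelta N \<omega> (iota N i j (Hi_elem N i c)) a b
    = map2 N (iota N i j) (iota N i j) (udelta N \<omega> (Hi_elem N i c)) a b"
    by simp
qed

lemma hopf_iso_iota:
  assumes "N > 0" "i \<in> ZN N" "j \<in> ZN N"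
  shows "hopf_iso N (Hi N i) (Hi N j) (onei N i) (onei N j) (mul N) (udelta N \<omega>)
            (epst N) (epst N) (Santi N i) (Santi N j) (iota N i j)"
  unfolding hopf_iso_def ball_Hi_iff lin_on_def
  using assms bij_betw_iota[OF assms(2,3)] udelta_iota_Hi_elem[OF assms]
  by (simp add: iota_Hi_elem onei_eq_Hi_elem Hi_elem_add Hi_elem_scale mul_Hi_elem epst_Hi_elem Santi_Hi_elem)

lemma udelta_X_diag:
  assumes "N > 0" "i \<in> ZN N" "s \<in> ZN N"
  shows "udelta N \<omega> (X N i i s) =
    (\<lambda>a b. \<Sum>w\<in>ZN N. \<Sum>q\<in>ZN N. if (w + q) mod int N = s then tens (X N i i w) (X N i i q) a b else 0)"
  using assms unfolding tens_def by (intro ext) (simp add: udelta_X ZN_mod_eq)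

lemma epst_X_diag:
  assumes "N > 0" "i \<in> ZN N" "s \<in> ZN N"
  shows "epst N (X N i i s) = (\<lambda>t. (if s = 0 then 1 else 0) * onei N i t)"
  using assms by (intro ext) (simp add: epst_X_apply)

theorem corollary4p5:
  fixes N :: nat and \<omega> :: complex
  assumes "N \<ge> 2" and "primitive_root N \<omega>"
  shows "RH N = {(\<lambda>t. \<Sum>i\<in>ZN N. xs i t) | xs. \<forall>i\<in>ZN N. xs i \<in> Hi N i}
    \<and> (\<forall>xs ys. (\<forall>i\<in>ZN N. xs i \<in> Hi N i \<and> ys i \<in> Hi N i)
         \<longrightarrow> (\<lambda>t. \<Sum>i\<in>ZN N. xs i t) = (\<lambda>t. \<Sum>i\<in>ZN N. ys i t)
         \<longrightarrow> (\<forall>i\<in>ZN N. xs i = ys i))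
    \<and> (\<forall>i\<in>ZN N.
         (\<forall>p\<in>ZN N. \<forall>q\<in>ZN N. mul N (X N i i p) (X N i i q) = (if p = q then X N i i p else (\<lambda>_. 0)))
       \<and> (\<forall>s\<in>ZN N. udelta N \<omega> (X N i i s) =
            (\<lambda>a b. \<Sum>w\<in>ZN N. \<Sum>q\<in>ZN N. if (w + q) mod int N = s then tens (X N i i w) (X N i i q) a b else 0))
       \<and> (\<forall>s\<in>ZN N. epst N (X N i i s) = (\<lambda>t. (if s = 0 then 1 else 0) * onei N i t))
       \<and> (\<forall>s\<in>ZN N. Santi N i (X N i i s) = X N i i (- s))
       \<and> hopf_over N (Hi N i) (onei N i) (mul N) (udelta N \<omega>) (epst N) (Santi N i))
    \<and> (\<forall>i\<in>ZN N. \<forall>j\<in>ZN N.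
         (\<forall>p\<in>ZN N. iota N i j (X N i i p) = X N j j p)
       \<and> hopf_iso N (Hi N i) (Hi N j) (onei N i) (onei N j) (mul N) (udelta N \<omega>)
            (epst N) (epst N) (Santi N i) (Santi N j) (iota N i j))"
proof -
  have N: "N > 0" using assms(1) by simp
  show ?thesis
    by (intro conjI ballI allI impI;
        (assumption | rule RH_eq_direct_sums[OF N] mul_X_diag[OF N] udelta_X_diag[OF N] epst_X_diag[OF N]
          Santi_X hopf_over_Hi[OF N] iota_X hopf_iso_iota[OF N] direct_sum_unique)+)
qed

end
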